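(* Let $\lambda$ be a partition with at most $n$ parts, $\mu\in S_n(\lambda)$ and $1\le i\le n-1$. Then (1) $T_if^*_\mu=f^*_{s_i\mu}$ if $\mu_i>\mu_{i+1}$; (2) $T_if^*_\mu=tf^*_\mu$ if $\mu_i=\mu_{i+1}$; (3) $T_if^*_\mu=(t-1)f^*_\mu+tf^*_{s_i\mu}$ if $\mu_i<\mu_{i+1}$.
   Context: Polynomials are in $x_1,\dots,x_n$ over $\mathbb{Q}(q,t)$. For $\mu\in\mathbb{N}^n$ let $k_i(\mu)=\#\{j<i:\mu_j>\mu_i\}+\#\{j>i:\mu_j\ge\mu_i\}$ and $\widetilde\mu=(q^{\mu_1}t^{-k_1(\mu)},\dots,q^{\mu_n}t^{-k_n(\mu)})$. For $\mu\in\mathbb{N}^n$, $|\mu|=d$, $E^*_\mu$ is the unique polynomial of degree at most $d$ with coefficient of $x^\mu$ equal to $1$ and $E^*_\mu(\widetilde\nu)=0$ for all $\nu\in\mathbb{N}^n$, $|\nu|\le d$, $\nu\ne\mu$. $S_n$ acts on compositions by $\sigma\cdot\mu=(\mu_{\sigma^{-1}(1)},\dots,\mu_{\sigma^{-1}(n)})$ and on polynomials by permuting variables; $s_i=(i,i+1)$; $T_i=t-\frac{tx_i-x_{i+1}}{x_i-x_{i+1}}(1-s_i)$; $T_\sigma=T_{i_1}\cdots T_{i_\ell}$ for a reduced word $\sigma=s_{i_1}\cdots s_{i_\ell}$. $S_n(\lambda)$ is the set of rearrangements of $\lambda$; for $\mu\in S_n(\lambda)$, $\sigma_\mu$ is the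 shortest permutation with $\sigma_\mu(\lambda)=\mu$, and the interpolation ASEP polynomial is $f^*_\mu=T_{\sigma_\mu}E^*_\lambda$. *)

theory Defs
  imports Main "HOL-Library.Poly_Mapping" "HOL-Computational_Algebra.Polynomial"
    "HOL-Computational_Algebra.Fraction_Field" "HOL-Combinatorics.Transposition" "HOL-Combinatorics.Permutations"
begin

text \<open>The coefficient field Q(q,t): fractions of bivariate rational polynomials.
  The inner polynomial variable is q, the outer one is t.\<close>
type_synonym K = "rat poly poly fract"

definition qq :: K where "qq = Fract [:[:0, 1:]:] 1"
definition tt :: K where "tt = Fract [:0, 1:] 1"

text \<open>Multivariate polynomials in x_0, x_1, ... (variables indexed from 0;
  the paper's x_i is our x_(i-1)).\<close>
type_synonym mpoly = "(nat \<Rightarrow>\<^sub>0 nat) \<Rightarrow>\<^sub>0 K"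

definition mvar :: "nat \<Rightarrow> mpoly" where
  "mvar i = Poly_Mapping.single (Poly_Mapping.single i 1) 1"

definition mconst :: "K \<Rightarrow> mpoly" where
  "mconst c = Poly_Mapping.single 0 c"

definition mon :: "nat list \<Rightarrow> (nat \<Rightarrow>\<^sub>0 nat)" where
  "mon mu = Poly_Mapping.nth mu"

definition mcoeff :: "mpoly \<Rightarrow> nat list \<Rightarrow> K" where
  "mcoeff p mu = Poly_Mapping.lookup p (mon mu)"

definition tdeg :: "(nat \<Rightarrow>\<^sub>0 nat) \<Rightarrow> nat" where
  "tdeg m = (\<Sum>j\<in>Poly_Mapping.keys m. Poly_Mapping.lookup m j)"

definition in_vars_deg :: "nat \<Rightarrow> nat \<Rightarrow> mpoly \<Rightarrow> bool" where
  "in_vars_deg n d p \<longleftrightarrow> (\<forall>m\<in>Poly_Mapping.keys p. Poly_Mapping.keys m \<subseteq> {..<n} \<and> tdeg m \<le> d)"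

definition meval :: "mpoly \<Rightarrow> (nat \<Rightarrow> K) \<Rightarrow> K" where
  "meval p a = (\<Sum>m\<in>Poly_Mapping.keys p. Poly_Mapping.lookup p m * (\<Prod>j\<in>Poly_Mapping.keys m. a j ^ Poly_Mapping.lookup m j))"

definition kk :: "nat list \<Rightarrow> nat \<Rightarrow> nat" where
  "kk mu i = card {j. j < i \<and> mu ! j > mu ! i} + card {j. i < j \<and> j < length mu \<and> mu ! j \<ge> mu ! i}"

definition tilde :: "nat list \<Rightarrow> nat \<Rightarrow> K" where
  "tilde mu i = (if i < length mu then qq ^ (mu ! i) * inverse tt ^ kk mu i else 0)"

definition Estar :: "nat list \<Rightarrow> mpoly" where
  "Estar mu = (THE p. in_vars_deg (length mu) (sum_list mu) p \<and> mcoeff p mu = 1 \<and>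
     (\<forall>nu. length nu = length mu \<and> sum_list nu \<le> sum_list mu \<and> nu \<noteq> mu
        \<longrightarrow> meval p (tilde nu) = 0))"

definition swapc :: "nat \<Rightarrow> nat list \<Rightarrow> nat list" where
  "swapc i mu = mu[i := mu ! Suc i, Suc i := mu ! i]"

definition swapp :: "nat \<Rightarrow> mpoly \<Rightarrow> mpoly" where
  "swapp i p = Poly_Mapping.map_key (Poly_Mapping.map_key (transpose i (Suc i))) p"

text \<open>Demazure-Lusztig operator
  T_i f = t f - (t x_i - x_(i+1)) / (x_i - x_(i+1)) * (f - s_i f),
  i.e. the unique polynomial g with (x_i - x_(i+1)) g equal to
  (x_i - x_(i+1)) t f - (t x_i - x_(i+1)) (f - s_i f).\<close>
definition Top :: "nat \<Rightarrow> mpoly \<Rightarrow> mpoly" where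
  "Top i f = (THE g. (mvar i - mvar (Suc i)) * g =
      (mvar i - mvar (Suc i)) * (mconst tt * f)
      - (mconst tt * mvar i - mvar (Suc i)) * (f - swapp i f))"

definition actc :: "(nat \<Rightarrow> nat) \<Rightarrow> nat list \<Rightarrow> nat list" where
  "actc \<sigma> mu = map (\<lambda>j. mu ! inv \<sigma> j) [0..<length mu]"

definition perm_len :: "nat \<Rightarrow> (nat \<Rightarrow> nat) \<Rightarrow> nat" where
  "perm_len n \<sigma> = card {(a, b). a < b \<and> b < n \<and> \<sigma> a > \<sigma> b}"

definition word_perm :: "nat list \<Rightarrow> (nat \<Rightarrow> nat)" where
  "word_perm w = foldr (\<lambda>i \<sigma>. transpose i (Suc i) \<circ> \<sigma>) w id"

definition reduced_word :: "nat \<Rightarrow> (nat \<Rightarrow> nat) \<Rightarrow> nat list \<Rightarrow> bool" where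
  "reduced_word n \<sigma> w \<longleftrightarrow> (\<forall>i\<in>set w. Suc i < n) \<and> word_perm w = \<sigma> \<and> length w = perm_len n \<sigma>"

definition Tperm :: "nat \<Rightarrow> (nat \<Rightarrow> nat) \<Rightarrow> mpoly \<Rightarrow> mpoly" where
  "Tperm n \<sigma> f = foldr Top (SOME w. reduced_word n \<sigma> w) f"

definition sigma_of :: "nat list \<Rightarrow> nat list \<Rightarrow> (nat \<Rightarrow> nat)" where
  "sigma_of lam mu = arg_min (perm_len (length lam)) (\<lambda>\<sigma>. \<sigma> permutes {..<length lam} \<and> actc \<sigma> lam = mu)"

definition fstar :: "nat list \<Rightarrow> nat list \<Rightarrow> mpoly" where
  "fstar lam mu = Tperm (length lam) (sigma_of lam mu) (Estar lam)"

end

theory Submission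
  imports Defs
begin

(* The operators T_i satisfy the Hecke relations (quadratic, braid, commutation) on polynomials
   in x_1..x_n of degree at most d. Each relation is checked at the spectral points \<nu>~ with
   |\<nu>| \<le> d: their coordinates are pairwise distinct, so there T_i acts as the Demazure-Lusztig
   operator on functions of the point, for which the relations are rational identities; and a
   polynomial of degree at most d vanishing at all these points is zero (unisolvence, by induction
   on n and d, splitting off the first variable and rotating compositions). The same evaluation
   gives T_i E*_\<lambda> = t E*_\<lambda> when \<lambda>_i = \<lambda>_(i+1).

   The permutation \<sigma>_\<mu> is the unique arrangement of \<lambda> into \<mu> keeping equal parts in order; its
   length is the number of pairs p < r with \<mu>_p < \<mu>_r. Hence every ascent \<mu>_i < \<mu>_(i+1) starts a
   reduced word of \<sigma>_\<mu>, all reduced words give the same T_\<sigma> E*_\<lambda> (braid and commutation relations),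
   and f*_\<mu> = T_i f*_(s_i \<mu>). Together with the quadratic relation this gives (1) and (3); (2)
   follows by moving the tie back to \<lambda> along ascents, again by the braid and commutation
   relations. *)

abbreviation lookup :: "('a \<Rightarrow>\<^sub>0 'b::zero) \<Rightarrow> 'a \<Rightarrow> 'b" where "lookup \<equiv> Poly_Mapping.lookup"
abbreviation keys :: "('a \<Rightarrow>\<^sub>0 'b::zero) \<Rightarrow> 'a set" where "keys \<equiv> Poly_Mapping.keys"
abbreviation single :: "'a \<Rightarrow> 'b \<Rightarrow> ('a \<Rightarrow>\<^sub>0 'b::zero)" where "single \<equiv> Poly_Mapping.single"

section \<open>Evaluation and degree bounds of polynomials\<close>

lemma poly_mapping_sum_single: "(p::'a \<Rightarrow>\<^sub>0 'b::comm_monoid_add) = (\<Sum>m\<in>keys p. single m (lookup p m))"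
proof (rule poly_mapping_eqI)
  fix k
  have "lookup (\<Sum>m\<in>keys p. single m (lookup p m)) k = (\<Sum>m\<in>keys p. (lookup p m when m = k))"
    by (simp add: lookup_sum lookup_single)
  also have "\<dots> = lookup p k"
  proof (cases "k \<in> keys p")
    case True
    then show ?thesis by (simp add: when_def sum.delta)
  next
    case False
    then show ?thesis by (auto simp: when_def in_keys_iff intro!: sum.neutral)
  qed
  finally show "lookup p k = lookup (\<Sum>m\<in>keys p. single m (lookup p m)) k" by simp
qed

lemma lookup_sum_single_inj:
  assumes "finite A" "inj_on f A"
  shows "lookup (\<Sum>a\<in>A. single (f a) (c a)) k = (if k \<in> f ` A then c (the_inv_into A f k) else 0)"
proof -
  have "lookup (\<Sum>a\<in>A. single (f a) (c a)) k = (\<Sum>a\<in>A. if f a = k then c a else 0)"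
    by (simp add: lookup_sum lookup_single when_def)
  also have "\<dots> = (if k \<in> f ` A then c (the_inv_into A f k) else 0)"
  proof (cases "k \<in> f ` A")
    case True
    then obtain a0 where a0: "a0 \<in> A" "k = f a0" by auto
    have "(\<Sum>a\<in>A. if f a = k then c a else 0) = (\<Sum>a\<in>A. if a = a0 then c a else 0)"
      using assms(2) a0 by (intro sum.cong) (auto simp: inj_on_def)
    also have "\<dots> = c a0" using a0 assms(1) by (simp add: sum.delta')
    finally show ?thesis using True a0 assms(2) by (simp add: the_inv_into_f_f)
  next
    case False
    then show ?thesis by (auto intro!: sum.neutral)
  qed
  finally show ?thesis .
qed

definition monom_eval :: "(nat \<Rightarrow>\<^sub>0 nat) \<Rightarrow> (nat \<Rightarrow> K) \<Rightarrow> K" where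
  "monom_eval m z = (\<Prod>j\<in>keys m. z j ^ lookup m j)"

lemma monom_eval_superset:
  assumes "finite U" "keys m \<subseteq> U"
  shows "monom_eval m z = (\<Prod>j\<in>U. z j ^ lookup m j)"
  unfolding monom_eval_def
  using assms by (intro prod.mono_neutral_left) (auto simp: in_keys_iff)

lemma keys_add_nat: "keys ((a::nat \<Rightarrow>\<^sub>0 nat) + b) = keys a \<union> keys b"
  by (auto simp: in_keys_iff lookup_add)

lemma monom_eval_add: "monom_eval (a + b) z = monom_eval a z * monom_eval b z"
proof -
  let ?U = "keys a \<union> keys b"
  have "monom_eval (a + b) z = (\<Prod>j\<in>?U. z j ^ lookup (a + b) j)"
    by (rule monom_eval_superset) (auto simp: keys_add_nat)
  also have "\<dots> = (\<Prod>j\<in>?U. z j ^ lookup a j) * (\<Prod>j\<in>?U. z j ^ lookup b j)"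
    by (simp add: lookup_add power_add prod.distrib)
  also have "\<dots> = monom_eval a z * monom_eval b z"
    by (subst (1 2) monom_eval_superset[of ?U]) auto
  finally show ?thesis .
qed

lemma monom_eval_single: "monom_eval (single j k) z = z j ^ k"
  by (simp add: monom_eval_def)

lemma monom_eval_times_pointwise: "monom_eval m (\<lambda>k. a k * b k) = monom_eval m a * monom_eval m b"
  by (simp add: monom_eval_def power_mult_distrib prod.distrib)

lemma meval_eq_sum_monom_eval: "meval p z = (\<Sum>m\<in>keys p. lookup p m * monom_eval m z)"
  by (simp add: meval_def monom_eval_def)

lemma meval_zero [simp]: "meval 0 z = 0"
  by (simp add: meval_def)

lemma meval_add: "meval (p + q) z = meval p z + meval q z"
  unfolding meval_eq_sum_monom_eval
  by (rule setsum_keys_plus_distrib) (auto simp: algebra_simps)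

lemma meval_single: "meval (single m c) z = c * monom_eval m z"
  by (simp add: meval_eq_sum_monom_eval)

lemma meval_sum: "meval (sum f A) z = (\<Sum>a\<in>A. meval (f a) z)"
  by (induction A rule: infinite_finite_induct) (auto simp: meval_add)

lemma meval_diff: "meval (p - q) z = meval p z - meval q z"
proof -
  have "meval (- q) z = - meval q z"
    by (simp add: meval_eq_sum_monom_eval sum_negf keys_minus)
  then show ?thesis using meval_add[of p "- q" z] by simp
qed

lemma meval_mult: "meval (p * q) z = meval p z * meval q z"
proof -
  have "p * q = (\<Sum>m\<in>keys p. single m (lookup p m)) * (\<Sum>m'\<in>keys q. single m' (lookup q m'))"
    by (subst (1) poly_mapping_sum_single, subst (2) poly_mapping_sum_single) simp
  also have "\<dots> = (\<Sum>m\<in>keys p. \<Sum>m'\<in>keys q. single (m + m') (lookup p m * lookup q m'))"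
    by (simp add: sum_distrib_left sum_distrib_right mult_single sum.swap[of _ "keys q"])
  finally have "meval (p * q) z =
      (\<Sum>m\<in>keys p. \<Sum>m'\<in>keys q. lookup p m * lookup q m' * monom_eval (m + m') z)"
    by (simp add: meval_sum meval_single)
  also have "\<dots> = (\<Sum>m\<in>keys p. lookup p m * monom_eval m z) * (\<Sum>m'\<in>keys q. lookup q m' * monom_eval m' z)"
    by (subst sum_product) (simp add: monom_eval_add algebra_simps)
  finally show ?thesis by (simp add: meval_eq_sum_monom_eval)
qed

lemma meval_mvar [simp]: "meval (mvar i) z = z i"
  by (simp add: mvar_def meval_single monom_eval_single)

lemma meval_mconst [simp]: "meval (mconst c) z = c"
  by (simp add: mconst_def meval_single monom_eval_def)

lemma meval_cong:
  assumes "\<And>m j. m \<in> keys p \<Longrightarrow> j \<in> keys m \<Longrightarrow> z j = z' j"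
  shows "meval p z = meval p z'"
  unfolding meval_def using assms by (intro sum.cong refl arg_cong2[where f="(*)"] prod.cong) auto

lemma single_mconst: "single m c = mconst c * single m 1"
  by (simp add: mconst_def mult_single)

lemma single_add_one: "single (a + b) (1::K) = single a 1 * single b 1"
  by (simp add: mult_single)

lemma single_single_one: "single (single j k) (1::K) = mvar j ^ k"
proof (induction k)
  case (Suc k)
  have "single (single j (Suc k)) (1::K) = single (single j 1 + single j k) 1"
    by (simp add: single_add[symmetric])
  then show ?case using Suc by (simp add: single_add_one mvar_def)
qed simp

lemma mconst_power: "mconst c ^ k = mconst (c ^ k)"
  by (induction k) (auto simp: mconst_def mult_single)

lemma lookup_mconst_mult: "lookup (mconst c * p) m = c * lookup p m"
proof -
  have "mconst c * p = (\<Sum>m'\<in>keys p. single m' (c * lookup p m'))"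
    by (subst (1) poly_mapping_sum_single) (simp add: sum_distrib_left mconst_def mult_single)
  then show ?thesis
    by (simp add: lookup_sum lookup_single when_def sum.delta in_keys_iff)
qed

lemma mvar_diff_nonzero: "i \<noteq> j \<Longrightarrow> mvar i - mvar j \<noteq> 0"
proof
  assume ij: "i \<noteq> j" and "mvar i - mvar j = 0"
  then have "lookup (mvar i) (single i 1) = lookup (mvar j) (single i 1)" by simp
  then have "single j (1::nat) = single i 1"
    by (simp add: mvar_def lookup_single when_def split: if_splits)
  then have "lookup (single j (1::nat)) i = lookup (single i 1) i" by simp
  then show False using ij by (simp add: lookup_single when_def)
qed

lemma tdeg_add: "tdeg (a + b) = tdeg a + tdeg b"
  unfolding tdeg_def by (rule setsum_keys_plus_distrib) auto

lemma tdeg_zero [simp]: "tdeg 0 = 0"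
  by (simp add: tdeg_def)

lemma tdeg_single [simp]: "tdeg (single j k) = k"
  by (simp add: tdeg_def)

lemma tdeg_eq_0: "tdeg m = 0 \<Longrightarrow> m = 0"
  by (rule poly_mapping_eqI) (auto simp: tdeg_def in_keys_iff)

definition in_vars_deg_on :: "nat set \<Rightarrow> nat \<Rightarrow> mpoly \<Rightarrow> bool" where
  "in_vars_deg_on S d p \<longleftrightarrow> (\<forall>m\<in>keys p. keys m \<subseteq> S \<and> tdeg m \<le> d)"

lemma in_vars_deg_eq_on: "in_vars_deg n d p = in_vars_deg_on {0..<n} d p"
  by (simp add: in_vars_deg_def in_vars_deg_on_def lessThan_atLeast0)

lemma in_vars_deg_on_zero [simp]: "in_vars_deg_on S d 0"
  by (simp add: in_vars_deg_on_def)

lemma in_vars_deg_on_mono: "in_vars_deg_on S d p \<Longrightarrow> d \<le> d' \<Longrightarrow> S \<subseteq> S' \<Longrightarrow> in_vars_deg_on S' d' p"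
  by (force simp: in_vars_deg_on_def)

lemma in_vars_deg_on_add: "in_vars_deg_on S d p \<Longrightarrow> in_vars_deg_on S d q \<Longrightarrow> in_vars_deg_on S d (p + q)"
  unfolding in_vars_deg_on_def using keys_add[of p q] by blast

lemma in_vars_deg_on_uminus: "in_vars_deg_on S d p \<Longrightarrow> in_vars_deg_on S d (- p)"
  by (simp add: in_vars_deg_on_def keys_minus)

lemma in_vars_deg_on_diff: "in_vars_deg_on S d p \<Longrightarrow> in_vars_deg_on S d q \<Longrightarrow> in_vars_deg_on S d (p - q)"
  using in_vars_deg_on_add[of S d p "- q"] in_vars_deg_on_uminus[of S d q] by simp

lemma in_vars_deg_on_sum: "(\<And>a. a \<in> A \<Longrightarrow> in_vars_deg_on S d (f a)) \<Longrightarrow> in_vars_deg_on S d (sum f A)"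
  by (induction A rule: infinite_finite_induct) (auto intro: in_vars_deg_on_add)

lemma in_vars_deg_on_mult:
  "in_vars_deg_on S d1 p \<Longrightarrow> in_vars_deg_on S d2 q \<Longrightarrow> in_vars_deg_on S (d1 + d2) (p * q)"
  unfolding in_vars_deg_on_def
proof
  fix m assume "\<forall>m\<in>keys p. keys m \<subseteq> S \<and> tdeg m \<le> d1" "\<forall>m\<in>keys q. keys m \<subseteq> S \<and> tdeg m \<le> d2"
    and "m \<in> keys (p * q)"
  moreover obtain a b where "m = a + b" "a \<in> keys p" "b \<in> keys q"
    using keys_mult[of p q] \<open>m \<in> keys (p * q)\<close> by blast
  ultimately show "keys m \<subseteq> S \<and> tdeg m \<le> d1 + d2" by (auto simp: keys_add_nat tdeg_add add_mono)
qed

lemma in_vars_deg_on_single: "keys m \<subseteq> S \<Longrightarrow> tdeg m \<le> d \<Longrightarrow> in_vars_deg_on S d (single m c)"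
  by (simp add: in_vars_deg_on_def)

lemma in_vars_deg_on_mconst [simp]: "in_vars_deg_on S d (mconst c)"
  by (simp add: mconst_def in_vars_deg_on_def)

lemma in_vars_deg_on_mvar: "i \<in> S \<Longrightarrow> 1 \<le> d \<Longrightarrow> in_vars_deg_on S d (mvar i)"
  by (simp add: mvar_def in_vars_deg_on_def)

lemma in_vars_deg_on_power: "in_vars_deg_on S d p \<Longrightarrow> in_vars_deg_on S (k * d) (p ^ k)"
proof (induction k)
  case 0 then show ?case using in_vars_deg_on_mconst[of S 0 1] by (simp add: mconst_def)
next
  case (Suc k) then show ?case using in_vars_deg_on_mult[of S d p "k * d" "p ^ k"] by simp
qed

lemma in_vars_deg_on_mconst_mult: "in_vars_deg_on S d p \<Longrightarrow> in_vars_deg_on S d (mconst c * p)"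
  using in_vars_deg_on_mult[of S 0 "mconst c" d p] by simp

lemma lookup_eq_0_if_tdeg_gt: "in_vars_deg_on S d g \<Longrightarrow> d < tdeg m \<Longrightarrow> lookup g m = 0"
  unfolding in_vars_deg_on_def by (metis in_keys_iff leD)

lemma meval_in_vars_deg_on_cong:
  assumes "in_vars_deg_on S d p" "\<And>k. k \<in> S \<Longrightarrow> z k = z' k"
  shows "meval p z = meval p z'"
  using assms by (intro meval_cong) (auto simp: in_vars_deg_on_def)

lemma constant_if_keys_zero:
  assumes "\<forall>m\<in>keys p. m = 0"
  shows "p = mconst (lookup p 0)"
  by (rule poly_mapping_eqI) (use assms in \<open>auto simp: mconst_def lookup_single when_def in_keys_iff\<close>)

lemma keys_zero_if_deg_0: "in_vars_deg_on S 0 p \<Longrightarrow> \<forall>m\<in>keys p. m = 0"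
  by (auto simp: in_vars_deg_on_def intro: tdeg_eq_0)

lemma keys_zero_if_no_vars: "in_vars_deg_on {} d p \<Longrightarrow> \<forall>m\<in>keys p. m = 0"
  by (auto simp: in_vars_deg_on_def in_keys_iff intro!: poly_mapping_eqI)

section \<open>Divided differences and the operators T_i\<close>

definition geom_quot :: "'a::comm_ring_1 \<Rightarrow> 'a \<Rightarrow> nat \<Rightarrow> 'a" where
  "geom_quot X Y N = (\<Sum>p<N. X ^ p * Y ^ (N - 1 - p))"

lemma geom_quot_eq: "X ^ N - Y ^ N = (X - Y) * geom_quot X Y N"
proof (cases N)
  case (Suc M)
  then show ?thesis using diff_power_eq_sum[of X M Y] by (simp add: geom_quot_def)
qed (simp add: geom_quot_def)

lemma in_vars_deg_on_geom_quot:
  assumes "in_vars_deg_on S 1 X" "in_vars_deg_on S 1 Y"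
  shows "in_vars_deg_on S (N - 1) (geom_quot X Y N)"
  unfolding geom_quot_def
proof (rule in_vars_deg_on_sum)
  fix p assume p: "p \<in> {..<N}"
  have "in_vars_deg_on S (p * 1 + (N - 1 - p) * 1) (X ^ p * Y ^ (N - 1 - p))"
    by (intro in_vars_deg_on_mult in_vars_deg_on_power assms)
  then show "in_vars_deg_on S (N - 1) (X ^ p * Y ^ (N - 1 - p))"
    by (rule in_vars_deg_on_mono) (use p in auto)
qed

definition swap_quot :: "'a::comm_ring_1 \<Rightarrow> 'a \<Rightarrow> nat \<Rightarrow> nat \<Rightarrow> 'a" where
  "swap_quot X Y a b =
     (if b \<le> a then (X * Y) ^ b * geom_quot X Y (a - b) else - ((X * Y) ^ a * geom_quot X Y (b - a)))"

lemma swap_quot_eq: "X ^ a * Y ^ b - X ^ b * Y ^ a = (X - Y) * swap_quot X Y a b"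
proof (cases "b \<le> a")
  case True
  then obtain N where a: "a = b + N" using le_Suc_ex by blast
  have "X ^ a * Y ^ b - X ^ b * Y ^ a = (X * Y) ^ b * (X ^ N - Y ^ N)"
    unfolding a by (simp add: power_add power_mult_distrib algebra_simps)
  then show ?thesis using True a by (simp add: swap_quot_def geom_quot_eq algebra_simps)
next
  case False
  then obtain N where b: "b = a + N" using le_Suc_ex[of a b] by auto
  have "X ^ a * Y ^ b - X ^ b * Y ^ a = - ((X * Y) ^ a * (X ^ N - Y ^ N))"
    unfolding b by (simp add: power_add power_mult_distrib algebra_simps)
  then show ?thesis using False b by (simp add: swap_quot_def geom_quot_eq algebra_simps)
qed

lemma in_vars_deg_on_swap_quot:
  assumes "in_vars_deg_on S 1 X" "in_vars_deg_on S 1 Y"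
  shows "in_vars_deg_on S (a + b - 1) (swap_quot X Y a b)"
proof -
  consider "a = b" | "b < a" | "a < b" by linarith
  then show ?thesis
  proof cases
    case 1
    then show ?thesis by (simp add: swap_quot_def geom_quot_def)
  next
    case 2
    have "in_vars_deg_on S (b * (1 + 1) + (a - b - 1)) ((X * Y) ^ b * geom_quot X Y (a - b))"
      by (intro in_vars_deg_on_mult in_vars_deg_on_power in_vars_deg_on_geom_quot assms)
    then show ?thesis using 2 unfolding swap_quot_def by (auto elim!: in_vars_deg_on_mono)
  next
    case 3
    have "in_vars_deg_on S (a * (1 + 1) + (b - a - 1)) ((X * Y) ^ a * geom_quot X Y (b - a))"
      by (intro in_vars_deg_on_mult in_vars_deg_on_power in_vars_deg_on_geom_quot assms)
    then show ?thesis using 3 unfolding swap_quot_def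
      by (auto intro!: in_vars_deg_on_uminus elim!: in_vars_deg_on_mono)
  qed
qed

context
  fixes f g :: "nat \<Rightarrow> nat"
  assumes fg: "\<And>x. f (g x) = x" and gf: "\<And>x. g (f x) = x"
begin

lemma inj_inverse_pair: "inj f" "inj g"
  using fg gf by (metis injI)+

lemma map_key_map_key_inverse: "Poly_Mapping.map_key g (Poly_Mapping.map_key f m) = m"
  by (rule poly_mapping_eqI) (simp add: map_key.rep_eq inj_inverse_pair fg)

lemma inj_map_key_inverse: "inj (Poly_Mapping.map_key f :: (nat \<Rightarrow>\<^sub>0 'b::zero) \<Rightarrow> _)"
  by (rule injI) (metis map_key_map_key_inverse)

lemma keys_map_key_inverse: "keys (Poly_Mapping.map_key f m) = g ` keys m"
proof -
  have "keys (Poly_Mapping.map_key f m) = f -` keys m"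
    by (auto simp: in_keys_iff map_key.rep_eq inj_inverse_pair)
  also have "\<dots> = g ` keys m"
    by (auto simp: image_iff fg) (metis gf)
  finally show ?thesis .
qed

lemma monom_eval_map_key: "monom_eval (Poly_Mapping.map_key f m) z = monom_eval m (z \<circ> g)"
proof -
  have "monom_eval (Poly_Mapping.map_key f m) z = (\<Prod>j\<in>g ` keys m. z j ^ lookup m (f j))"
    by (simp add: monom_eval_def keys_map_key_inverse map_key.rep_eq inj_inverse_pair)
  also have "\<dots> = (\<Prod>k\<in>keys m. z (g k) ^ lookup m k)"
    by (subst prod.reindex) (auto simp: inj_on_def fg injD[OF inj_inverse_pair(2)])
  finally show ?thesis by (simp add: monom_eval_def)
qed

lemma tdeg_map_key: "tdeg (Poly_Mapping.map_key f m) = tdeg m"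
proof -
  have "tdeg (Poly_Mapping.map_key f m) = (\<Sum>j\<in>g ` keys m. lookup m (f j))"
    by (simp add: tdeg_def keys_map_key_inverse map_key.rep_eq inj_inverse_pair)
  also have "\<dots> = (\<Sum>k\<in>keys m. lookup m k)"
    by (subst sum.reindex) (auto simp: inj_on_def fg injD[OF inj_inverse_pair(2)])
  finally show ?thesis by (simp add: tdeg_def)
qed

end

abbreviation tau :: "nat \<Rightarrow> nat \<Rightarrow> nat" where "tau i \<equiv> transpose i (Suc i)"

abbreviation swap_monom :: "nat \<Rightarrow> (nat \<Rightarrow>\<^sub>0 nat) \<Rightarrow> (nat \<Rightarrow>\<^sub>0 nat)" where
  "swap_monom i \<equiv> Poly_Mapping.map_key (tau i)"

lemma swap_monom_swap_monom [simp]: "swap_monom i (swap_monom i m) = m"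
  by (rule map_key_map_key_inverse) simp_all

lemma inj_swap_monom: "inj (swap_monom i)"
  by (metis injI swap_monom_swap_monom)

lemma lookup_swapp: "lookup (swapp i p) m = lookup p (swap_monom i m)"
  by (simp add: swapp_def map_key.rep_eq inj_swap_monom)

lemma swapp_sum_single: "swapp i p = (\<Sum>m\<in>keys p. single (swap_monom i m) (lookup p m))"
proof (rule poly_mapping_eqI)
  fix k
  have inj: "inj_on (swap_monom i) (keys p)"
    using inj_swap_monom by (rule inj_on_subset) simp
  have "lookup (\<Sum>m\<in>keys p. single (swap_monom i m) (lookup p m)) k =
      (if k \<in> swap_monom i ` keys p then lookup p (the_inv_into (keys p) (swap_monom i) k) else 0)"
    by (rule lookup_sum_single_inj) (simp_all add: inj)
  also have "\<dots> = lookup p (swap_monom i k)"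
  proof (cases "k \<in> swap_monom i ` keys p")
    case True
    then show ?thesis using inj by (auto simp: the_inv_into_f_f)
  next
    case False
    then have "swap_monom i k \<notin> keys p" by (metis image_eqI swap_monom_swap_monom)
    then show ?thesis using False by (simp add: in_keys_iff)
  qed
  finally show "lookup (swapp i p) k = lookup (\<Sum>m\<in>keys p. single (swap_monom i m) (lookup p m)) k"
    by (simp add: lookup_swapp)
qed

lemma meval_swapp: "meval (swapp i p) z = meval p (z \<circ> tau i)"
proof -
  have "meval (swapp i p) z = (\<Sum>m\<in>keys p. lookup p m * monom_eval (swap_monom i m) z)"
    by (subst swapp_sum_single) (simp add: meval_sum meval_single)
  also have "\<dots> = (\<Sum>m\<in>keys p. lookup p m * monom_eval m (z \<circ> tau i))"
    by (simp add: monom_eval_map_key[of "tau i" "tau i"])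
  finally show ?thesis by (simp add: meval_eq_sum_monom_eval)
qed

lemma swapp_mconst_mult: "swapp i (mconst c * f) = mconst c * swapp i f"
  by (rule poly_mapping_eqI) (simp add: lookup_swapp lookup_mconst_mult)

definition clear_pair :: "nat \<Rightarrow> (nat \<Rightarrow>\<^sub>0 nat) \<Rightarrow> (nat \<Rightarrow>\<^sub>0 nat)" where
  "clear_pair i m = Poly_Mapping.update i 0 (Poly_Mapping.update (Suc i) 0 m)"

lemma clear_pair_decomp: "m = clear_pair i m + single i (lookup m i) + single (Suc i) (lookup m (Suc i))"
  by (rule poly_mapping_eqI) (simp add: clear_pair_def lookup_add lookup_update lookup_single when_def)

lemma clear_pair_decomp_swap:
  "swap_monom i m = clear_pair i m + single i (lookup m (Suc i)) + single (Suc i) (lookup m i)"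
  by (rule poly_mapping_eqI)
    (auto simp: clear_pair_def lookup_add lookup_update lookup_single when_def map_key.rep_eq
       inj_transpose transpose_def)

definition monom_divdiff :: "nat \<Rightarrow> (nat \<Rightarrow>\<^sub>0 nat) \<Rightarrow> mpoly" where
  "monom_divdiff i m =
     single (clear_pair i m) 1 * swap_quot (mvar i) (mvar (Suc i)) (lookup m i) (lookup m (Suc i))"

lemma monom_divdiff_eq:
  "single m 1 - single (swap_monom i m) 1 = (mvar i - mvar (Suc i)) * monom_divdiff i m"
proof -
  let ?X = "mvar i" and ?Y = "mvar (Suc i)" and ?a = "lookup m i" and ?b = "lookup m (Suc i)"
  have "single m (1::K) = single (clear_pair i m) 1 * ?X ^ ?a * ?Y ^ ?b"
    by (subst (1) clear_pair_decomp[of m i]) (simp add: single_add_one single_single_one)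
  moreover have "single (swap_monom i m) (1::K) = single (clear_pair i m) 1 * ?X ^ ?b * ?Y ^ ?a"
    by (subst (1) clear_pair_decomp_swap[of i m]) (simp add: single_add_one single_single_one)
  ultimately have "single m 1 - single (swap_monom i m) 1 =
      single (clear_pair i m) 1 * (?X ^ ?a * ?Y ^ ?b - ?X ^ ?b * ?Y ^ ?a)"
    by (simp add: algebra_simps)
  then show ?thesis by (simp add: swap_quot_eq monom_divdiff_def algebra_simps)
qed

lemma monom_divdiff_0 [simp]: "monom_divdiff i 0 = 0"
  by (simp add: monom_divdiff_def swap_quot_def geom_quot_def)

lemma in_vars_deg_on_monom_divdiff:
  assumes "keys m \<subseteq> S" "i \<in> S" "Suc i \<in> S"
  shows "in_vars_deg_on S (tdeg m - 1) (monom_divdiff i m)"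
proof (cases "lookup m i + lookup m (Suc i) = 0")
  case True
  then show ?thesis by (simp add: monom_divdiff_def swap_quot_def geom_quot_def)
next
  case False
  have tdeg: "tdeg m = tdeg (clear_pair i m) + lookup m i + lookup m (Suc i)"
    by (subst (1) clear_pair_decomp[of m i]) (simp add: tdeg_add)
  have "keys (clear_pair i m) \<subseteq> keys m"
    by (auto simp: clear_pair_def keys_update)
  then have "in_vars_deg_on S (tdeg (clear_pair i m) + (lookup m i + lookup m (Suc i) - 1))
      (monom_divdiff i m)"
    unfolding monom_divdiff_def using assms
    by (intro in_vars_deg_on_mult in_vars_deg_on_single in_vars_deg_on_swap_quot in_vars_deg_on_mvar) auto
  then show ?thesis by (rule in_vars_deg_on_mono) (use False tdeg in auto)
qed

definition divdiff :: "nat \<Rightarrow> mpoly \<Rightarrow> mpoly" where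
  "divdiff i f = (\<Sum>m\<in>keys f. mconst (lookup f m) * monom_divdiff i m)"

lemma divdiff_eq: "f - swapp i f = (mvar i - mvar (Suc i)) * divdiff i f"
proof -
  have "f - swapp i f =
      (\<Sum>m\<in>keys f. single m (lookup f m)) - (\<Sum>m\<in>keys f. single (swap_monom i m) (lookup f m))"
    by (subst (1) poly_mapping_sum_single, subst swapp_sum_single) simp
  also have "\<dots> = (\<Sum>m\<in>keys f. mconst (lookup f m) * (single m 1 - single (swap_monom i m) 1))"
    by (simp add: sum_subtractf[symmetric] algebra_simps single_mconst[of _ "lookup f _"])
  also have "\<dots> = (mvar i - mvar (Suc i)) * divdiff i f"
    by (simp add: monom_divdiff_eq divdiff_def sum_distrib_left algebra_simps)
  finally show ?thesis .
qed

lemma in_vars_deg_on_linear_mult_divdiff: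
  assumes "in_vars_deg_on S d f" "i \<in> S" "Suc i \<in> S" "in_vars_deg_on S 1 L"
  shows "in_vars_deg_on S d (L * divdiff i f)"
  unfolding divdiff_def sum_distrib_left
proof (rule in_vars_deg_on_sum)
  fix m assume "m \<in> keys f"
  then have m: "keys m \<subseteq> S" "tdeg m \<le> d" using assms(1) by (auto simp: in_vars_deg_on_def)
  show "in_vars_deg_on S d (L * (mconst (lookup f m) * monom_divdiff i m))"
  proof (cases "tdeg m = 0")
    case True
    then have "m = 0" by (rule tdeg_eq_0)
    then show ?thesis by simp
  next
    case False
    have "in_vars_deg_on S (1 + (0 + (tdeg m - 1))) (L * (mconst (lookup f m) * monom_divdiff i m))"
      using in_vars_deg_on_monom_divdiff[OF m(1) assms(2,3)]
      by (intro in_vars_deg_on_mult assms(4) in_vars_deg_on_mconst) auto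
    then show ?thesis by (rule in_vars_deg_on_mono) (use False m in auto)
  qed
qed

lemma Top_divdiff: "Top i f = mconst tt * f - (mconst tt * mvar i - mvar (Suc i)) * divdiff i f"
  unfolding Top_def
proof (rule the_equality)
  fix g assume "(mvar i - mvar (Suc i)) * g =
    (mvar i - mvar (Suc i)) * (mconst tt * f) - (mconst tt * mvar i - mvar (Suc i)) * (f - swapp i f)"
  then have "(mvar i - mvar (Suc i)) * g =
      (mvar i - mvar (Suc i)) * (mconst tt * f - (mconst tt * mvar i - mvar (Suc i)) * divdiff i f)"
    by (simp add: divdiff_eq algebra_simps)
  then show "g = mconst tt * f - (mconst tt * mvar i - mvar (Suc i)) * divdiff i f"
    using mvar_diff_nonzero[of i "Suc i"] by simp
qed (simp add: divdiff_eq algebra_simps)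

lemma Top_characterization: "(mvar i - mvar (Suc i)) * Top i f =
    (mvar i - mvar (Suc i)) * (mconst tt * f) - (mconst tt * mvar i - mvar (Suc i)) * (f - swapp i f)"
  by (simp add: Top_divdiff divdiff_eq algebra_simps)

lemma Top_mconst_mult: "Top i (mconst c * f) = mconst c * Top i f"
proof -
  have "(mvar i - mvar (Suc i)) * Top i (mconst c * f) = mconst c * ((mvar i - mvar (Suc i)) * Top i f)"
    by (simp only: Top_characterization swapp_mconst_mult) (simp add: algebra_simps)
  then show ?thesis using mvar_diff_nonzero[of i "Suc i"] by (simp add: ac_simps)
qed

lemma in_vars_deg_on_Top:
  assumes "in_vars_deg_on S d f" "i \<in> S" "Suc i \<in> S"
  shows "in_vars_deg_on S d (Top i f)"
  unfolding Top_divdiff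
proof (rule in_vars_deg_on_diff)
  show "in_vars_deg_on S d (mconst tt * f)" by (rule in_vars_deg_on_mconst_mult[OF assms(1)])
  have "in_vars_deg_on S (0 + 1) (mconst tt * mvar i)"
    using assms by (intro in_vars_deg_on_mult in_vars_deg_on_mconst in_vars_deg_on_mvar) auto
  then have "in_vars_deg_on S 1 (mconst tt * mvar i - mvar (Suc i))"
    using assms by (auto intro!: in_vars_deg_on_diff in_vars_deg_on_mvar)
  then show "in_vars_deg_on S d ((mconst tt * mvar i - mvar (Suc i)) * divdiff i f)"
    by (intro in_vars_deg_on_linear_mult_divdiff assms)
qed

lemma meval_Top:
  assumes "z i \<noteq> z (Suc i)"
  shows "meval (Top i f) z = tt * meval f z
     - (tt * z i - z (Suc i)) / (z i - z (Suc i)) * (meval f z - meval f (z \<circ> tau i))"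
proof -
  have "(z i - z (Suc i)) * meval (Top i f) z = (z i - z (Suc i)) * (tt * meval f z)
      - (tt * z i - z (Suc i)) * (meval f z - meval f (z \<circ> tau i))"
    using arg_cong[OF Top_characterization, of "\<lambda>p. meval p z"]
    by (simp add: meval_mult meval_diff meval_swapp)
  then show ?thesis using assms by (simp add: field_simps)
qed

section \<open>Substituting and renaming variables\<close>

lemma update_zero_decomp: "m = Poly_Mapping.update k 0 m + single k (lookup m k)"
  by (rule poly_mapping_eqI) (simp add: lookup_add lookup_update lookup_single when_def)

lemma tdeg_update_zero: "tdeg m = tdeg (Poly_Mapping.update k 0 m) + lookup m k"
  by (subst (1) update_zero_decomp[of m k]) (simp add: tdeg_add)

lemma monom_eval_fun_upd:
  "monom_eval m (z(k := c)) = c ^ lookup m k * monom_eval (Poly_Mapping.update k 0 m) z"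
proof -
  have "monom_eval m (z(k := c)) = monom_eval (Poly_Mapping.update k 0 m) (z(k := c)) * c ^ lookup m k"
    by (subst (1) update_zero_decomp[of m k]) (simp add: monom_eval_add monom_eval_single)
  also have "monom_eval (Poly_Mapping.update k 0 m) (z(k := c)) =
      monom_eval (Poly_Mapping.update k 0 m) z"
    unfolding monom_eval_def by (rule prod.cong) (auto simp: keys_update)
  finally show ?thesis by (simp only: mult.commute)
qed

definition subst_var :: "nat \<Rightarrow> K \<Rightarrow> mpoly \<Rightarrow> mpoly" where
  "subst_var k c p = (\<Sum>m\<in>keys p. single (Poly_Mapping.update k 0 m) (lookup p m * c ^ lookup m k))"

lemma meval_subst_var: "meval (subst_var k c p) z = meval p (z(k := c))"
proof -
  have "meval (subst_var k c p) z =
      (\<Sum>m\<in>keys p. lookup p m * c ^ lookup m k * monom_eval (Poly_Mapping.update k 0 m) z)"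
    by (simp add: subst_var_def meval_sum meval_single)
  also have "\<dots> = meval p (z(k := c))"
    by (simp add: meval_eq_sum_monom_eval monom_eval_fun_upd algebra_simps)
  finally show ?thesis .
qed

lemma in_vars_deg_on_subst_var: "in_vars_deg_on S d p \<Longrightarrow> in_vars_deg_on (S - {k}) d (subst_var k c p)"
  unfolding subst_var_def
proof (rule in_vars_deg_on_sum, rule in_vars_deg_on_single)
  fix m assume "in_vars_deg_on S d p" "m \<in> keys p"
  then have "keys m \<subseteq> S" "tdeg m \<le> d" by (auto simp: in_vars_deg_on_def)
  then show "keys (Poly_Mapping.update k 0 m) \<subseteq> S - {k}" "tdeg (Poly_Mapping.update k 0 m) \<le> d"
    using tdeg_update_zero[of m k] by (auto simp: keys_update)
qed

definition subst_var_quot :: "nat \<Rightarrow> K \<Rightarrow> mpoly \<Rightarrow> mpoly" where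
  "subst_var_quot k c p = (\<Sum>m\<in>keys p.
     mconst (lookup p m) *
       (single (Poly_Mapping.update k 0 m) 1 * geom_quot (mvar k) (mconst c) (lookup m k)))"

lemma subst_var_decomp: "p = subst_var k c p + (mvar k - mconst c) * subst_var_quot k c p"
proof -
  have monom: "single m 1 - single (Poly_Mapping.update k 0 m) (c ^ lookup m k) =
     (mvar k - mconst c) *
       (single (Poly_Mapping.update k 0 m) 1 * geom_quot (mvar k) (mconst c) (lookup m k))"
    for m
  proof -
    let ?m' = "Poly_Mapping.update k 0 m"
    have "single m (1::K) = single ?m' 1 * mvar k ^ lookup m k"
      by (subst (1) update_zero_decomp[of m k]) (simp add: single_add_one single_single_one)
    moreover have "single ?m' (c ^ lookup m k) = single ?m' 1 * mconst c ^ lookup m k"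
      by (simp add: mconst_power single_mconst[of _ "c ^ _"] mult.commute)
    ultimately have "single m 1 - single ?m' (c ^ lookup m k) =
       single ?m' 1 * (mvar k ^ lookup m k - mconst c ^ lookup m k)"
      by (simp add: algebra_simps)
    then show ?thesis by (simp only: geom_quot_eq ac_simps)
  qed
  have "p - subst_var k c p = (\<Sum>m\<in>keys p. single m (lookup p m)) - subst_var k c p"
    by (subst (1) poly_mapping_sum_single) simp
  also have "\<dots> = (\<Sum>m\<in>keys p. mconst (lookup p m) *
      (single m 1 - single (Poly_Mapping.update k 0 m) (c ^ lookup m k)))"
    unfolding subst_var_def sum_subtractf[symmetric]
    by (rule sum.cong) (simp_all add: mconst_def mult_single right_diff_distrib)
  also have "\<dots> = (mvar k - mconst c) * subst_var_quot k c p"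
    by (simp add: monom subst_var_quot_def sum_distrib_left algebra_simps)
  finally show ?thesis by (simp add: algebra_simps)
qed

lemma in_vars_deg_on_subst_var_quot:
  assumes "in_vars_deg_on S d p" "k \<in> S"
  shows "in_vars_deg_on S (d - 1) (subst_var_quot k c p)"
  unfolding subst_var_quot_def
proof (rule in_vars_deg_on_sum)
  fix m assume "m \<in> keys p"
  then have m: "keys m \<subseteq> S" "tdeg m \<le> d" using assms(1) by (auto simp: in_vars_deg_on_def)
  let ?m' = "Poly_Mapping.update k 0 m"
  have bound: "in_vars_deg_on S (0 + (tdeg ?m' + (lookup m k - 1)))
      (mconst (lookup p m) * (single ?m' 1 * geom_quot (mvar k) (mconst c) (lookup m k)))"
    using m assms(2)
    by (intro in_vars_deg_on_mult in_vars_deg_on_mconst in_vars_deg_on_single in_vars_deg_on_geom_quot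
        in_vars_deg_on_mvar) (auto simp: keys_update)
  show "in_vars_deg_on S (d - 1)
      (mconst (lookup p m) * (single ?m' 1 * geom_quot (mvar k) (mconst c) (lookup m k)))"
  proof (cases "lookup m k = 0")
    case False
    show ?thesis by (rule in_vars_deg_on_mono[OF bound]) (use False m tdeg_update_zero[of m k] in auto)
  qed (simp add: geom_quot_def)
qed

definition rename_scaled :: "(nat \<Rightarrow> nat) \<Rightarrow> (nat \<Rightarrow> K) \<Rightarrow> mpoly \<Rightarrow> mpoly" where
  "rename_scaled f \<alpha> p = (\<Sum>m\<in>keys p. single (Poly_Mapping.map_key f m) (lookup p m * monom_eval m \<alpha>))"

context
  fixes f g :: "nat \<Rightarrow> nat"
  assumes fg: "\<And>x. f (g x) = x" and gf: "\<And>x. g (f x) = x"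
begin

lemma meval_rename_scaled: "meval (rename_scaled f \<alpha> p) y = meval p (\<lambda>k. \<alpha> k * y (g k))"
proof -
  have "meval (rename_scaled f \<alpha> p) y =
      (\<Sum>m\<in>keys p. lookup p m * monom_eval m \<alpha> * monom_eval (Poly_Mapping.map_key f m) y)"
    by (simp add: rename_scaled_def meval_sum meval_single)
  also have "\<dots> = meval p (\<lambda>k. \<alpha> k * y (g k))"
    by (simp add: meval_eq_sum_monom_eval monom_eval_map_key[OF fg gf] monom_eval_times_pointwise o_def
        algebra_simps)
  finally show ?thesis .
qed

lemma lookup_rename_scaled:
  "lookup (rename_scaled f \<alpha> p) (Poly_Mapping.map_key f m) = lookup p m * monom_eval m \<alpha>"
proof -
  let ?F = "Poly_Mapping.map_key f :: (nat \<Rightarrow>\<^sub>0 nat) \<Rightarrow> _"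
  have inj: "inj ?F" by (rule inj_map_key_inverse[OF fg gf])
  have "lookup (rename_scaled f \<alpha> p) (?F m) = (if ?F m \<in> ?F ` keys p
      then lookup p (the_inv_into (keys p) ?F (?F m)) * monom_eval (the_inv_into (keys p) ?F (?F m)) \<alpha>
      else 0)"
    unfolding rename_scaled_def by (rule lookup_sum_single_inj) (auto intro: inj_on_subset[OF inj])
  also have "\<dots> = lookup p m * monom_eval m \<alpha>"
    using inj by (cases "m \<in> keys p") (auto simp: the_inv_into_f_f inj_on_def inj_def in_keys_iff)
  finally show ?thesis .
qed

lemma rename_scaled_eq_0:
  assumes "\<And>m. monom_eval m \<alpha> \<noteq> 0" "rename_scaled f \<alpha> p = 0"
  shows "p = 0"
proof (rule poly_mapping_eqI)
  fix m
  have "lookup p m * monom_eval m \<alpha> = 0" using lookup_rename_scaled[of \<alpha> p m] assms(2) by simp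
  then show "lookup p m = lookup 0 m" using assms(1)[of m] by simp
qed

lemma in_vars_deg_on_rename_scaled:
  assumes "g ` S \<subseteq> S" "in_vars_deg_on S d p"
  shows "in_vars_deg_on S d (rename_scaled f \<alpha> p)"
  unfolding rename_scaled_def
proof (intro in_vars_deg_on_sum in_vars_deg_on_single)
  fix m assume "m \<in> keys p"
  then have "keys m \<subseteq> S" "tdeg m \<le> d" using assms(2) by (auto simp: in_vars_deg_on_def)
  then show "keys (Poly_Mapping.map_key f m) \<subseteq> S" "tdeg (Poly_Mapping.map_key f m) \<le> d"
    using assms(1) by (auto simp: keys_map_key_inverse[OF fg gf] tdeg_map_key[OF fg gf])
qed

end

section \<open>Spectral vectors\<close>

lemma pCons_0_1_eq_monom: "[:0, 1:] = monom (1::'a::comm_semiring_1) 1"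
  by (rule poly_eqI) (simp add: coeff_pCons split: nat.split)

lemma Fract_monom_power: "Fract (monom (c::rat poly) k) 1 ^ n = Fract (monom (c ^ n) (k * n)) 1"
  by (induction n) (simp_all add: One_fract_def monom_0[symmetric] mult_monom algebra_simps)

lemma monom_one_power: "(monom (1::'a::comm_semiring_1) 1) ^ a = monom 1 a"
  by (induction a) (simp_all add: monom_0[symmetric] mult_monom)

lemma qq_eq_Fract: "qq = Fract (monom (monom 1 1) 0) 1"
  by (simp add: qq_def monom_0 pCons_0_1_eq_monom)

lemma tt_eq_Fract: "tt = Fract (monom 1 1) 1"
  by (simp add: tt_def pCons_0_1_eq_monom)

lemma qq_power_tt_power: "qq ^ a * tt ^ l = Fract (monom (monom 1 a) l) 1"
  using monom_one_power[where 'a=rat, of a]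
  by (simp add: qq_eq_Fract tt_eq_Fract Fract_monom_power mult_monom)

lemma qq_power_tt_power_eq_iff: "qq ^ a * tt ^ l = qq ^ b * tt ^ k \<longleftrightarrow> a = b \<and> l = k"
  by (auto simp: qq_power_tt_power eq_fract monom_eq_iff')

lemma tt_nonzero [simp]: "tt \<noteq> 0"
  by (simp add: tt_eq_Fract Zero_fract_def eq_fract)

lemma qq_nonzero [simp]: "qq \<noteq> 0"
  by (simp add: qq_eq_Fract Zero_fract_def eq_fract)

lemma qq_power_inverse_tt_power_eq_iff:
  "qq ^ a * inverse tt ^ k = qq ^ b * inverse tt ^ l \<longleftrightarrow> a = b \<and> k = l"
proof -
  have "qq ^ a * inverse tt ^ k = qq ^ b * inverse tt ^ l \<longleftrightarrow>
        (qq ^ a * inverse tt ^ k) * (tt ^ k * tt ^ l) = (qq ^ b * inverse tt ^ l) * (tt ^ k * tt ^ l)"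
    by simp
  also have "\<dots> \<longleftrightarrow> qq ^ a * tt ^ l = qq ^ b * tt ^ k"
    by (simp add: field_simps power_inverse)
  finally show ?thesis by (auto simp: qq_power_tt_power_eq_iff)
qed

definition kk_term :: "nat list \<Rightarrow> nat \<Rightarrow> nat \<Rightarrow> nat" where
  "kk_term v i j = (if (j < i \<and> v ! j > v ! i) \<or> (i < j \<and> v ! j \<ge> v ! i) then 1 else 0)"

lemma kk_eq_sum: "i < length v \<Longrightarrow> kk v i = (\<Sum>j<length v. kk_term v i j)"
proof -
  assume i: "i < length v"
  let ?A = "{j. j < i \<and> v ! j > v ! i}" and ?B = "{j. i < j \<and> j < length v \<and> v ! j \<ge> v ! i}"
  have "card ?A + card ?B = card (?A \<union> ?B)"
    by (rule card_Un_disjoint[symmetric]) auto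
  also have "?A \<union> ?B = {j\<in>{..<length v}. (j < i \<and> v ! j > v ! i) \<or> (i < j \<and> v ! j \<ge> v ! i)}"
    using i by auto
  also have "card \<dots> = (\<Sum>j<length v. kk_term v i j)"
    by (simp add: kk_term_def sum.If_cases Int_def conj_commute)
  finally show ?thesis by (simp add: kk_def)
qed

lemma tilde_eq_sum: "i < length v \<Longrightarrow> tilde v i = qq ^ (v ! i) * inverse tt ^ (\<Sum>j<length v. kk_term v i j)"
  by (simp add: tilde_def kk_eq_sum)

lemma kk_less_if_tie:
  assumes "b < length v" "v ! a = v ! b" "a < b"
  shows "kk v b < kk v a"
proof -
  let ?n = "length v"
  have le: "kk_term v b l \<le> kk_term v a l" if "l \<noteq> b" for l
    using assms that by (cases "l = a") (auto simp: kk_term_def)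
  have "(\<Sum>l<?n. kk_term v b l) = (\<Sum>l\<in>{..<?n} - {b}. kk_term v b l)"
    using assms by (subst sum.remove[of _ b]) (auto simp: kk_term_def)
  also have "\<dots> \<le> (\<Sum>l\<in>{..<?n} - {b}. kk_term v a l)"
    by (rule sum_mono) (use le in auto)
  also have "\<dots> < (\<Sum>l<?n. kk_term v a l)"
    using assms by (subst (2) sum.remove[of _ b]) (auto simp: kk_term_def)
  finally show ?thesis using assms by (simp add: kk_eq_sum)
qed

lemma inj_on_tilde: "inj_on (tilde v) {..<length v}"
proof (rule inj_onI)
  fix a b assume ab: "a \<in> {..<length v}" "b \<in> {..<length v}" and eq: "tilde v a = tilde v b"
  then have "v ! a = v ! b \<and> kk v a = kk v b" by (simp add: tilde_def qq_power_inverse_tt_power_eq_iff)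
  then show "a = b"
    using kk_less_if_tie[of a v b] kk_less_if_tie[of b v a] ab by (cases a b rule: linorder_cases) auto
qed

lemma tilde_Suc_if_tie:
  assumes "Suc j < length v" "v ! j = v ! Suc j"
  shows "tilde v (Suc j) = tt * tilde v j"
proof -
  have "kk_term v j l = kk_term v (Suc j) l + (if l = Suc j then 1 else 0)" for l
    using assms by (cases "l = j") (auto simp: kk_term_def)
  then have "(\<Sum>l<length v. kk_term v j l) = (\<Sum>l<length v. kk_term v (Suc j) l) + 1"
    using assms by (simp add: sum.distrib)
  then show ?thesis using assms by (simp add: tilde_eq_sum power_inverse field_simps)
qed

lemma length_swapc [simp]: "length (swapc j v) = length v"
  by (simp add: swapc_def)

lemma swapc_nth: "Suc j < length v \<Longrightarrow> l < length v \<Longrightarrow> swapc j v ! l = v ! tau j l"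
  by (auto simp: swapc_def nth_list_update transpose_def)

lemma tau_less: "Suc j < n \<Longrightarrow> l < n \<Longrightarrow> tau j l < n"
  by (auto simp: transpose_def)

lemma tilde_swapc:
  assumes "Suc j < length v" "v ! j \<noteq> v ! Suc j"
  shows "tilde (swapc j v) = tilde v \<circ> tau j"
proof
  fix i
  let ?n = "length v" and ?w = "swapc j v"
  show "tilde ?w i = (tilde v \<circ> tau j) i"
  proof (cases "i < ?n")
    case False
    then have "tau j i = i" using assms by (auto simp: transpose_def)
    then show ?thesis using False by (simp add: tilde_def)
  next
    case True
    have "kk_term ?w i l = kk_term v (tau j i) (tau j l)" if "l < ?n" for l
      using assms True that by (auto simp: kk_term_def swapc_nth transpose_def)
    then have "(\<Sum>l<?n. kk_term ?w i l) = (\<Sum>l<?n. kk_term v (tau j i) (tau j l))"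
      by (intro sum.cong) simp_all
    also have "\<dots> = (\<Sum>l<?n. kk_term v (tau j i) l)"
      by (rule sum.reindex_bij_betw)
        (use assms in \<open>auto intro!: bij_betw_imageI simp: inj_on_def transpose_def image_iff\<close>)
    finally show ?thesis using True assms tau_less[of j ?n i]
      by (simp add: tilde_eq_sum swapc_nth)
  qed
qed

lemma tilde_Cons_0_0: "tilde (0 # r) 0 = inverse tt ^ length r"
proof -
  have "(\<Sum>j<length (0 # r). kk_term (0 # r) 0 j) =
      kk_term (0 # r) 0 0 + (\<Sum>j<length r. kk_term (0 # r) 0 (Suc j))"
    by (simp only: length_Cons sum.lessThan_Suc_shift)
  also have "\<dots> = length r" by (simp add: kk_term_def)
  finally show ?thesis by (simp add: tilde_eq_sum)
qed

lemma tilde_Cons_0_Suc: "tilde (0 # r) (Suc j) = tilde r j"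
proof (cases "j < length r")
  case True
  have "(\<Sum>l<length (0 # r). kk_term (0 # r) (Suc j) l) =
      kk_term (0 # r) (Suc j) 0 + (\<Sum>l<length r. kk_term (0 # r) (Suc j) (Suc l))"
    by (simp only: length_Cons sum.lessThan_Suc_shift)
  also have "\<dots> = (\<Sum>l<length r. kk_term r j l)"
    by (simp add: kk_term_def)
  finally show ?thesis using True by (simp add: tilde_eq_sum)
qed (simp add: tilde_def)

text \<open>The recursion behind unisolvence: moving a positive first part to the end, lowered by one,
  rotates the spectral vector, up to a factor q in the first coordinate.\<close>

lemma tilde_Suc_Cons_0: "tilde (Suc a # r) 0 = qq * tilde (r @ [a]) (length r)"
proof -
  have "(\<Sum>l<length (Suc a # r). kk_term (Suc a # r) 0 l) =
      kk_term (Suc a # r) 0 0 + (\<Sum>l<length r. kk_term (Suc a # r) 0 (Suc l))"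
    by (simp only: length_Cons sum.lessThan_Suc_shift)
  also have "\<dots> = (\<Sum>l<length r. if r ! l > a then 1 else 0)"
    by (simp add: kk_term_def Suc_le_eq)
  finally have 1: "(\<Sum>l<length (Suc a # r). kk_term (Suc a # r) 0 l) =
      (\<Sum>l<length r. if r ! l > a then 1 else 0)" .
  have "(\<Sum>l<length (r @ [a]). kk_term (r @ [a]) (length r) l) =
      (\<Sum>l<length r. kk_term (r @ [a]) (length r) l) + kk_term (r @ [a]) (length r) (length r)"
    by (simp only: length_append_singleton sum.lessThan_Suc)
  also have "\<dots> = (\<Sum>l<length r. if r ! l > a then 1 else 0)"
    by (simp add: kk_term_def nth_append)
  finally have 2: "(\<Sum>l<length (r @ [a]). kk_term (r @ [a]) (length r) l) =
      (\<Sum>l<length r. if r ! l > a then 1 else 0)" .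
  from 1 2 show ?thesis by (simp add: tilde_eq_sum nth_append)
qed

lemma tilde_Suc_Cons_Suc: "j < length r \<Longrightarrow> tilde (Suc a # r) (Suc j) = tilde (r @ [a]) j"
proof -
  assume j: "j < length r"
  let ?c = "if a \<ge> r ! j then 1 else 0"
  have "(\<Sum>l<length (Suc a # r). kk_term (Suc a # r) (Suc j) l) =
      kk_term (Suc a # r) (Suc j) 0 + (\<Sum>l<length r. kk_term (Suc a # r) (Suc j) (Suc l))"
    by (simp only: length_Cons sum.lessThan_Suc_shift)
  also have "\<dots> = ?c + (\<Sum>l<length r. kk_term r j l)"
    by (simp add: kk_term_def less_Suc_eq_le Suc_le_eq)
  finally have 1: "(\<Sum>l<length (Suc a # r). kk_term (Suc a # r) (Suc j) l) =
      ?c + (\<Sum>l<length r. kk_term r j l)" .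
  have "(\<Sum>l<length (r @ [a]). kk_term (r @ [a]) j l) =
      (\<Sum>l<length r. kk_term (r @ [a]) j l) + kk_term (r @ [a]) j (length r)"
    by (simp only: length_append_singleton sum.lessThan_Suc)
  also have "\<dots> = (\<Sum>l<length r. kk_term r j l) + ?c"
    using j by (simp add: kk_term_def nth_append)
  finally have 2: "(\<Sum>l<length (r @ [a]). kk_term (r @ [a]) j l) = (\<Sum>l<length r. kk_term r j l) + ?c" .
  from 1 2 show ?thesis using j by (simp add: tilde_eq_sum nth_append)
qed

lemma tilde_Suc_Cons_0_neq: "tilde (Suc a # r) 0 \<noteq> inverse tt ^ n"
proof
  assume "tilde (Suc a # r) 0 = inverse tt ^ n"
  then have "qq ^ Suc a * inverse tt ^ kk (Suc a # r) 0 = qq ^ 0 * inverse tt ^ n"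
    by (simp add: tilde_def)
  then show False by (simp only: qq_power_inverse_tt_power_eq_iff) simp
qed

definition tilde_at :: "nat \<Rightarrow> nat list \<Rightarrow> nat \<Rightarrow> K" where
  "tilde_at s v k = (if s \<le> k then tilde v (k - s) else 0)"

lemma tilde_at_0 [simp]: "tilde_at 0 v = tilde v"
  by (simp add: tilde_at_def fun_eq_iff)

lemma tilde_at_Cons_0: "tilde_at s (0 # r) = (tilde_at (Suc s) r)(s := inverse tt ^ length r)"
proof
  fix k
  show "tilde_at s (0 # r) k = ((tilde_at (Suc s) r)(s := inverse tt ^ length r)) k"
  proof (cases "s < k")
    case True
    then have "k - s = Suc (k - Suc s)" by simp
    then show ?thesis using True by (simp add: tilde_at_def tilde_Cons_0_Suc)
  qed (auto simp: tilde_at_def tilde_Cons_0_0)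
qed

definition mon_at :: "nat \<Rightarrow> nat list \<Rightarrow> (nat \<Rightarrow>\<^sub>0 nat)" where
  "mon_at s v = (\<Sum>j<length v. single (s + j) (v ! j))"

lemma lookup_mon_at: "lookup (mon_at s v) k = (if s \<le> k \<and> k < s + length v then v ! (k - s) else 0)"
proof -
  have "lookup (mon_at s v) k = (if k \<in> (\<lambda>j. s + j) ` {..<length v}
      then v ! (the_inv_into {..<length v} (\<lambda>j. s + j) k) else 0)"
    unfolding mon_at_def by (rule lookup_sum_single_inj) (auto simp: inj_on_def)
  also have "\<dots> = (if s \<le> k \<and> k < s + length v then v ! (k - s) else 0)"
  proof (cases "s \<le> k \<and> k < s + length v")
    case True
    then have "k = s + (k - s)" "k - s < length v" by auto
    then have "the_inv_into {..<length v} (\<lambda>j. s + j) k = k - s"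
      by (metis inj_on_def add_left_imp_eq lessThan_iff the_inv_into_f_eq)
    moreover have "k \<in> (\<lambda>j. s + j) ` {..<length v}"
      using True by (auto simp: image_iff intro!: bexI[of _ "k - s"])
    ultimately show ?thesis using True by simp
  qed auto
  finally show ?thesis .
qed

lemma tdeg_mon_at: "tdeg (mon_at s v) = sum_list v"
proof -
  have "tdeg (sum f A) = (\<Sum>a\<in>A. tdeg (f a))" for f :: "nat \<Rightarrow> nat \<Rightarrow>\<^sub>0 nat" and A
    by (induction A rule: infinite_finite_induct) (auto simp: tdeg_add)
  then show ?thesis by (simp add: mon_at_def sum_list_sum_nth atLeast0LessThan)
qed

lemma mon_eq_mon_at: "mon v = mon_at 0 v"
  by (rule poly_mapping_eqI) (simp add: mon_def lookup_mon_at nth_default_def)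

lemma mon_at_Cons_0: "mon_at s (0 # r) = mon_at (Suc s) r"
  by (rule poly_mapping_eqI) (auto simp: lookup_mon_at nth_Cons' Suc_diff_Suc)

lemma mon_at_Cons_Suc: "mon_at s (Suc a # r) = mon_at s (a # r) + single s 1"
  by (rule poly_mapping_eqI) (auto simp: lookup_mon_at lookup_add lookup_single when_def nth_Cons')

lemma mon_at_replicate_0: "mon_at s (replicate n 0) = 0"
  by (rule tdeg_eq_0) (simp add: tdeg_mon_at)

lemma lookup_mvar_mult: "lookup (mvar k * p) (m + single k 1) = lookup p m"
proof -
  have "mvar k * p = (\<Sum>m'\<in>keys p. single (single k 1 + m') (lookup p m'))"
    by (subst (1) poly_mapping_sum_single) (simp add: sum_distrib_left mvar_def mult_single)
  then have "lookup (mvar k * p) (m + single k 1) =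
      (\<Sum>m'\<in>keys p. if single k 1 + m' = m + single k 1 then lookup p m' else 0)"
    by (simp add: lookup_sum lookup_single when_def)
  also have "\<dots> = (\<Sum>m'\<in>keys p. if m' = m then lookup p m' else 0)"
    by (rule sum.cong) (auto simp: add.commute)
  also have "\<dots> = lookup p m" by (simp add: sum.delta' in_keys_iff)
  finally show ?thesis .
qed

lemma lookup_mvar_mult_eq_0: "lookup m k = 0 \<Longrightarrow> lookup (mvar k * p) m = 0"
proof -
  assume m: "lookup m k = 0"
  have "single k 1 + x \<noteq> m" for x
    using arg_cong[of _ _ "\<lambda>m. lookup m k"] m by (force simp: lookup_add)
  moreover have "mvar k * p = (\<Sum>m'\<in>keys p. single (single k 1 + m') (lookup p m'))"
    by (subst (1) poly_mapping_sum_single) (simp add: sum_distrib_left mvar_def mult_single)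
  ultimately show ?thesis by (simp add: lookup_sum lookup_single when_def)
qed

definition rot_down :: "nat \<Rightarrow> nat \<Rightarrow> nat \<Rightarrow> nat" where
  "rot_down s n k = (if k = s then s + n else if s < k \<and> k \<le> s + n then k - 1 else k)"

definition rot_up :: "nat \<Rightarrow> nat \<Rightarrow> nat \<Rightarrow> nat" where
  "rot_up s n k = (if k = s + n then s else if s \<le> k \<and> k < s + n then k + 1 else k)"

lemma rot_up_rot_down: "rot_up s n (rot_down s n k) = k"
  by (auto simp: rot_up_def rot_down_def)

lemma rot_down_rot_up: "rot_down s n (rot_up s n k) = k"
  by (auto simp: rot_up_def rot_down_def)

definition q_at :: "nat \<Rightarrow> nat \<Rightarrow> K" where
  "q_at s k = (if k = s then qq else 1)"

definition inverse_q_at :: "nat \<Rightarrow> nat \<Rightarrow> K" where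
  "inverse_q_at s k = (if k = s then inverse qq else 1)"

lemma tilde_at_Suc_Cons:
  assumes "length r = n" "s \<le> k" "k < s + Suc n"
  shows "tilde_at s (Suc a # r) k = q_at s k * tilde_at s (r @ [a]) (rot_down s n k)"
proof (cases "k = s")
  case False
  then have "k - s = Suc (k - 1 - s)" "k - 1 - s < length r" using assms by auto
  then show ?thesis using assms False by (simp add: tilde_at_def q_at_def rot_down_def tilde_Suc_Cons_Suc)
qed (use assms in \<open>simp add: tilde_at_def q_at_def rot_down_def tilde_Suc_Cons_0\<close>)

lemma tilde_at_snoc:
  assumes "length r = n" "s \<le> k" "k < s + Suc n"
  shows "tilde_at s (r @ [a]) k = inverse_q_at (s + n) k * tilde_at s (Suc a # r) (rot_up s n k)"
proof -
  have "rot_up s n k \<in> {s..<s + Suc n}" using assms by (auto simp: rot_up_def)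
  then have "tilde_at s (Suc a # r) (rot_up s n k) = q_at s (rot_up s n k) * tilde_at s (r @ [a]) k"
    using tilde_at_Suc_Cons[OF assms(1), of s "rot_up s n k" a] by (simp add: rot_down_rot_up)
  moreover have "inverse_q_at (s + n) k * q_at s (rot_up s n k) = 1"
    by (auto simp: inverse_q_at_def q_at_def rot_up_def)
  ultimately show ?thesis by (metis mult.assoc mult_1)
qed

lemma map_key_rot_up_mon_at:
  assumes "length r = n"
  shows "Poly_Mapping.map_key (rot_up s n) (mon_at s (a # r)) = mon_at s (r @ [a])"
proof -
  have inj: "inj (rot_up s n)" by (metis injI rot_down_rot_up)
  show ?thesis
    by (rule poly_mapping_eqI)
      (use assms in \<open>auto simp: map_key.rep_eq inj lookup_mon_at rot_up_def nth_append nth_Cons'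
        Suc_diff_le\<close>)
qed

section \<open>Unisolvence of the spectral points\<close>

definition comps :: "nat \<Rightarrow> nat \<Rightarrow> nat list set" where
  "comps n d = {v. length v = n \<and> sum_list v \<le> d}"

definition unisolvent :: "nat \<Rightarrow> nat \<Rightarrow> nat \<Rightarrow> bool" where
  "unisolvent s n d \<longleftrightarrow> (\<forall>p. in_vars_deg_on {s..<s + n} d p \<longrightarrow>
     (\<forall>v\<in>comps n d. meval p (tilde_at s v) = 0) \<longrightarrow> p = 0)"

definition interpolating :: "nat \<Rightarrow> nat \<Rightarrow> nat \<Rightarrow> bool" where
  "interpolating s n d \<longleftrightarrow> (\<forall>y. \<exists>p. in_vars_deg_on {s..<s + n} d p \<and>
     (\<forall>v\<in>comps n d. meval p (tilde_at s v) = y v))"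

definition top_coeff_nonzero :: "nat \<Rightarrow> nat \<Rightarrow> nat \<Rightarrow> bool" where
  "top_coeff_nonzero s n d \<longleftrightarrow> (\<forall>p lam. lam \<in> comps n d \<longrightarrow> sum_list lam = d \<longrightarrow>
     in_vars_deg_on {s..<s + n} d p \<longrightarrow> (\<forall>v\<in>comps n d. v \<noteq> lam \<longrightarrow> meval p (tilde_at s v) = 0) \<longrightarrow>
     meval p (tilde_at s lam) \<noteq> 0 \<longrightarrow> lookup p (mon_at s lam) \<noteq> 0)"

lemma comps_trivial: "n = 0 \<or> d = 0 \<Longrightarrow> comps n d = {replicate n 0}"
  by (auto simp: comps_def) (metis replicate_length_same sum_list_eq_0_iff)

lemma comps_Suc_Suc_cases:
  assumes "v \<in> comps (Suc n) (Suc d)"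
  obtains w where "v = 0 # w" "w \<in> comps n (Suc d)"
    | a r where "v = Suc a # r" "length r = n" "r @ [a] \<in> comps (Suc n) d"
proof (cases v)
  case (Cons x r)
  then show ?thesis using that assms by (cases x) (auto simp: comps_def)
qed (use assms in \<open>simp add: comps_def\<close>)

lemma comps_snoc_cases:
  assumes "w \<in> comps (Suc n) d"
  obtains a r where "w = r @ [a]" "length r = n" "Suc a # r \<in> comps (Suc n) (Suc d)"
proof -
  obtain r a where "w = r @ [a]" using assms by (cases w rule: rev_exhaust) (auto simp: comps_def)
  then show ?thesis using that assms by (auto simp: comps_def)
qed

lemma interpolation_trivial:
  assumes "n = 0 \<or> d = 0"
  shows "unisolvent s n d" "interpolating s n d" "top_coeff_nonzero s n d"
proof -
  have const: "p = mconst (lookup p 0)" if "in_vars_deg_on {s..<s + n} d p" for p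
    using assms that keys_zero_if_deg_0[of _ p] keys_zero_if_no_vars[of d p]
    by (intro constant_if_keys_zero) auto
  have comps: "comps n d = {replicate n 0}" by (rule comps_trivial[OF assms])
  show "unisolvent s n d"
    unfolding unisolvent_def comps by (metis const insertI1 meval_mconst mconst_def single_zero)
  show "interpolating s n d"
    unfolding interpolating_def comps by (metis in_vars_deg_on_mconst meval_mconst singletonD)
  show "top_coeff_nonzero s n d"
    unfolding top_coeff_nonzero_def comps by (metis const meval_mconst mon_at_replicate_0 singletonD)
qed

text \<open>The induction step splits off the first variable x_s: p = r + (x_s - c) g where r does not
  involve x_s and c = t^(-n) is the first coordinate of every spectral vector of a composition
  with first part 0. The polynomial r is handled on the remaining n variables, and g, of lower
  degree, after rotating the variables by the shift lemma tilde_at_Suc_Cons.\<close>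

definition subst_first :: "nat \<Rightarrow> nat \<Rightarrow> mpoly \<Rightarrow> mpoly" where
  "subst_first s n p = subst_var s (inverse tt ^ n) p"

definition rotated_quot :: "nat \<Rightarrow> nat \<Rightarrow> mpoly \<Rightarrow> mpoly" where
  "rotated_quot s n p = rename_scaled (rot_up s n) (q_at s) (subst_var_quot s (inverse tt ^ n) p)"

definition glue :: "nat \<Rightarrow> nat \<Rightarrow> mpoly \<Rightarrow> mpoly \<Rightarrow> mpoly" where
  "glue s n r g =
     r + (mvar s - mconst (inverse tt ^ n)) * rename_scaled (rot_down s n) (inverse_q_at (s + n)) g"

lemma meval_rename_rot_up:
  assumes "in_vars_deg_on {s..<s + Suc n} e g" "length r = n"
  shows "meval (rename_scaled (rot_up s n) (q_at s) g) (tilde_at s (r @ [a])) =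
    meval g (tilde_at s (Suc a # r))"
proof -
  have "meval (rename_scaled (rot_up s n) (q_at s) g) (tilde_at s (r @ [a])) =
      meval g (\<lambda>k. q_at s k * tilde_at s (r @ [a]) (rot_down s n k))"
    by (rule meval_rename_scaled[OF rot_up_rot_down[of s n] rot_down_rot_up[of s n]])
  also have "\<dots> = meval g (tilde_at s (Suc a # r))"
    by (rule meval_in_vars_deg_on_cong[OF assms(1)]) (use assms(2) in \<open>auto simp: tilde_at_Suc_Cons\<close>)
  finally show ?thesis .
qed

lemma meval_rename_rot_down:
  assumes "in_vars_deg_on {s..<s + Suc n} e g" "length r = n"
  shows "meval (rename_scaled (rot_down s n) (inverse_q_at (s + n)) g) (tilde_at s (Suc a # r)) =
    meval g (tilde_at s (r @ [a]))"
proof -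
  have "meval (rename_scaled (rot_down s n) (inverse_q_at (s + n)) g) (tilde_at s (Suc a # r)) =
      meval g (\<lambda>k. inverse_q_at (s + n) k * tilde_at s (Suc a # r) (rot_up s n k))"
    by (rule meval_rename_scaled[OF rot_down_rot_up[of s n] rot_up_rot_down[of s n]])
  also have "\<dots> = meval g (tilde_at s (r @ [a]))"
    by (rule meval_in_vars_deg_on_cong[OF assms(1)]) (use assms(2) in \<open>auto simp: tilde_at_snoc\<close>)
  finally show ?thesis .
qed

lemma in_vars_deg_on_rename_rot:
  assumes "in_vars_deg_on {s..<s + Suc n} e g"
  shows "in_vars_deg_on {s..<s + Suc n} e (rename_scaled (rot_up s n) \<alpha> g)"
    and "in_vars_deg_on {s..<s + Suc n} e (rename_scaled (rot_down s n) \<alpha> g)"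
proof -
  show "in_vars_deg_on {s..<s + Suc n} e (rename_scaled (rot_up s n) \<alpha> g)"
    by (rule in_vars_deg_on_rename_scaled[OF rot_up_rot_down[of s n] rot_down_rot_up[of s n] _ assms])
      (auto simp: rot_down_def)
  show "in_vars_deg_on {s..<s + Suc n} e (rename_scaled (rot_down s n) \<alpha> g)"
    by (rule in_vars_deg_on_rename_scaled[OF rot_down_rot_up[of s n] rot_up_rot_down[of s n] _ assms])
      (auto simp: rot_up_def)
qed

context
  fixes s n d :: nat and p :: mpoly
  assumes p: "in_vars_deg_on {s..<s + Suc n} (Suc d) p"
begin

lemma in_vars_deg_on_subst_first: "in_vars_deg_on {Suc s..<Suc s + n} (Suc d) (subst_first s n p)"
  using in_vars_deg_on_subst_var[OF p, of s "inverse tt ^ n"]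
  by (simp add: subst_first_def atLeastLessThan_def lessThan_def atLeast_def)
    (auto elim!: in_vars_deg_on_mono)

lemma in_vars_deg_on_quot_first: "in_vars_deg_on {s..<s + Suc n} d (subst_var_quot s c p)"
  using in_vars_deg_on_subst_var_quot[OF p, of s c] by simp

lemma in_vars_deg_on_rotated_quot: "in_vars_deg_on {s..<s + Suc n} d (rotated_quot s n p)"
  unfolding rotated_quot_def
  by (rule in_vars_deg_on_rename_rot(1)[OF in_vars_deg_on_quot_first])

lemma meval_rotated_quot:
  assumes "subst_first s n p = 0" "length r = n"
  shows "meval (rotated_quot s n p) (tilde_at s (r @ [a])) =
    meval p (tilde_at s (Suc a # r)) / (tilde (Suc a # r) 0 - inverse tt ^ n)"
proof -
  let ?g = "subst_var_quot s (inverse tt ^ n) p"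
  have "meval p (tilde_at s (Suc a # r)) =
      (tilde (Suc a # r) 0 - inverse tt ^ n) * meval ?g (tilde_at s (Suc a # r))"
    using arg_cong[OF subst_var_decomp[of p s "inverse tt ^ n"],
        of "\<lambda>p. meval p (tilde_at s (Suc a # r))"]
      assms(1)
    by (simp add: subst_first_def meval_add meval_mult meval_diff tilde_at_def)
  then show ?thesis
    using meval_rename_rot_up[OF in_vars_deg_on_quot_first assms(2)] tilde_Suc_Cons_0_neq[of a r n]
    by (simp add: rotated_quot_def)
qed

lemma eq_0_if_split_eq_0:
  assumes "subst_first s n p = 0" "rotated_quot s n p = 0"
  shows "p = 0"
proof -
  have "subst_var_quot s (inverse tt ^ n) p = 0"
    using assms(2) unfolding rotated_quot_def
    by (rule rename_scaled_eq_0[OF rot_up_rot_down[of s n] rot_down_rot_up[of s n], rotated])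
      (simp add: monom_eval_def q_at_def)
  then show ?thesis
    using subst_var_decomp[of p s "inverse tt ^ n"] assms(1) by (simp add: subst_first_def)
qed

lemma lookup_mon_at_split:
  assumes "sum_list lam = Suc d"
  shows "lookup p (mon_at s lam) =
    lookup (subst_first s n p) (mon_at s lam) +
    lookup (mvar s * subst_var_quot s (inverse tt ^ n) p) (mon_at s lam)"
proof -
  have "lookup (subst_var_quot s (inverse tt ^ n) p) (mon_at s lam) = 0"
    by (rule lookup_eq_0_if_tdeg_gt[OF in_vars_deg_on_quot_first]) (simp add: tdeg_mon_at assms)
  then show ?thesis
    using arg_cong[OF subst_var_decomp[of p s "inverse tt ^ n"], of "\<lambda>q. lookup q (mon_at s lam)"]
    by (simp add: subst_first_def lookup_add lookup_minus algebra_simps lookup_mconst_mult)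
qed

lemma lookup_mon_at_Cons_0:
  "sum_list lam = Suc d \<Longrightarrow> lookup p (mon_at s (0 # lam)) = lookup (subst_first s n p) (mon_at (Suc s) lam)"
  using lookup_mon_at_split[of "0 # lam"] lookup_mvar_mult_eq_0[of "mon_at s (0 # lam)" s]
  by (simp add: lookup_mon_at mon_at_Cons_0)

lemma lookup_mon_at_Suc_Cons:
  assumes "subst_first s n p = 0" "sum_list (Suc a # lam) = Suc d" "length lam = n"
    and "lookup (rotated_quot s n p) (mon_at s (lam @ [a])) \<noteq> 0"
  shows "lookup p (mon_at s (Suc a # lam)) \<noteq> 0"
proof -
  let ?g = "subst_var_quot s (inverse tt ^ n) p"
  have "lookup ?g (mon_at s (a # lam)) \<noteq> 0"
    using assms(4) lookup_rename_scaled[OF rot_up_rot_down[of s n] rot_down_rot_up[of s n], of "q_at s" ?g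
        "mon_at s (a # lam)"]
      map_key_rot_up_mon_at[OF assms(3), of s a]
    by (simp add: rotated_quot_def)
  moreover have "lookup (mvar s * ?g) (mon_at s (Suc a # lam)) = lookup ?g (mon_at s (a # lam))"
    using lookup_mvar_mult[of s ?g "mon_at s (a # lam)"] by (simp add: mon_at_Cons_Suc)
  ultimately show ?thesis using lookup_mon_at_split[OF assms(2)] assms(1) by simp
qed

end

lemma in_vars_deg_on_glue:
  assumes "in_vars_deg_on {Suc s..<Suc s + n} (Suc d) r" "in_vars_deg_on {s..<s + Suc n} d g"
  shows "in_vars_deg_on {s..<s + Suc n} (Suc d) (glue s n r g)"
  unfolding glue_def
proof (rule in_vars_deg_on_add)
  show "in_vars_deg_on {s..<s + Suc n} (Suc d) r" using in_vars_deg_on_mono[OF assms(1)] by simp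
  have "in_vars_deg_on {s..<s + Suc n} (1 + d)
      ((mvar s - mconst (inverse tt ^ n)) * rename_scaled (rot_down s n) (inverse_q_at (s + n)) g)"
    by (intro in_vars_deg_on_mult in_vars_deg_on_rename_rot assms(2) in_vars_deg_on_diff
        in_vars_deg_on_mvar) auto
  then show "in_vars_deg_on {s..<s + Suc n} (Suc d)
      ((mvar s - mconst (inverse tt ^ n)) * rename_scaled (rot_down s n) (inverse_q_at (s + n)) g)"
    by simp
qed

lemma meval_glue_Cons_0:
  assumes "in_vars_deg_on {Suc s..<Suc s + n} e r" "length w = n"
  shows "meval (glue s n r g) (tilde_at s (0 # w)) = meval r (tilde_at (Suc s) w)"
  using meval_in_vars_deg_on_cong[OF assms(1), of "tilde_at s (0 # w)" "tilde_at (Suc s) w"] assms(2)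
  by (auto simp: glue_def meval_add meval_mult meval_diff tilde_at_Cons_0)

lemma meval_glue_Suc_Cons:
  assumes "in_vars_deg_on {s..<s + Suc n} e g" "length w = n"
  shows "meval (glue s n r g) (tilde_at s (Suc a # w)) =
    meval r (tilde_at s (Suc a # w)) +
    (tilde (Suc a # w) 0 - inverse tt ^ n) * meval g (tilde_at s (w @ [a]))"
  using meval_rename_rot_down[OF assms]
  by (simp add: glue_def meval_add meval_mult meval_diff tilde_at_def)

lemma meval_subst_first:
  "length w = n \<Longrightarrow> meval (subst_first s n p) (tilde_at (Suc s) w) = meval p (tilde_at s (0 # w))"
  by (simp add: subst_first_def meval_subst_var tilde_at_Cons_0)

lemma unisolvent_step:
  assumes first: "unisolvent (Suc s) n (Suc d)" and rest: "unisolvent s (Suc n) d"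
  shows "unisolvent s (Suc n) (Suc d)"
  unfolding unisolvent_def
proof (intro allI impI)
  fix p assume p: "in_vars_deg_on {s..<s + Suc n} (Suc d) p"
    and van: "\<forall>v\<in>comps (Suc n) (Suc d). meval p (tilde_at s v) = 0"
  have r: "subst_first s n p = 0"
    using first unfolding unisolvent_def
  proof (elim allE impE)
    show "\<forall>w\<in>comps n (Suc d). meval (subst_first s n p) (tilde_at (Suc s) w) = 0"
      using van by (auto simp: meval_subst_first comps_def)
  qed (rule in_vars_deg_on_subst_first[OF p])
  have "rotated_quot s n p = 0"
    using rest unfolding unisolvent_def
  proof (elim allE impE)
    show "\<forall>w\<in>comps (Suc n) d. meval (rotated_quot s n p) (tilde_at s w) = 0"
    proof
      fix w assume "w \<in> comps (Suc n) d"
      then obtain a r' where w: "w = r' @ [a]" "length r' = n" "Suc a # r' \<in> comps (Suc n) (Suc d)"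
        by (rule comps_snoc_cases)
      then show "meval (rotated_quot s n p) (tilde_at s w) = 0"
        using van meval_rotated_quot[OF p r w(2), of a] by simp
    qed
  qed (rule in_vars_deg_on_rotated_quot[OF p])
  then show "p = 0" by (rule eq_0_if_split_eq_0[OF p r])
qed

lemma interpolating_step:
  assumes first: "interpolating (Suc s) n (Suc d)" and rest: "interpolating s (Suc n) d"
  shows "interpolating s (Suc n) (Suc d)"
  unfolding interpolating_def
proof
  fix y
  obtain r where r: "in_vars_deg_on {Suc s..<Suc s + n} (Suc d) r"
    and r_interp: "\<forall>w\<in>comps n (Suc d). meval r (tilde_at (Suc s) w) = y (0 # w)"
    using first unfolding interpolating_def by (elim allE[of _ "\<lambda>w. y (0 # w)"]) blast
  define y' where "y' w = (y (Suc (last w) # butlast w) - meval r (tilde_at s (Suc (last w) # butlast w)))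
    / (tilde (Suc (last w) # butlast w) 0 - inverse tt ^ n)" for w
  obtain g where g: "in_vars_deg_on {s..<s + Suc n} d g"
    and g_interp: "\<forall>w\<in>comps (Suc n) d. meval g (tilde_at s w) = y' w"
    using rest unfolding interpolating_def by (elim allE[of _ y']) blast
  have "meval (glue s n r g) (tilde_at s v) = y v" if "v \<in> comps (Suc n) (Suc d)" for v
    using that
  proof (cases rule: comps_Suc_Suc_cases)
    case (1 w)
    then show ?thesis using meval_glue_Cons_0[OF r] r_interp by (simp add: comps_def)
  next
    case (2 a w)
    then show ?thesis
      using meval_glue_Suc_Cons[OF g 2(2)] g_interp tilde_Suc_Cons_0_neq[of a w n] by (simp add: y'_def)
  qed
  then show "\<exists>p. in_vars_deg_on {s..<s + Suc n} (Suc d) p \<and>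
      (\<forall>v\<in>comps (Suc n) (Suc d). meval p (tilde_at s v) = y v)"
    using in_vars_deg_on_glue[OF r g] by blast
qed

context
  fixes s n d :: nat and p :: mpoly and lam :: "nat list"
  assumes p: "in_vars_deg_on {s..<s + Suc n} (Suc d) p" and lam_size: "sum_list lam = Suc d"
    and van: "\<forall>v\<in>comps (Suc n) (Suc d). v \<noteq> lam \<longrightarrow> meval p (tilde_at s v) = 0"
    and nonzero: "meval p (tilde_at s lam) \<noteq> 0"
begin

lemma lookup_mon_at_nonzero_Cons_0:
  assumes first: "top_coeff_nonzero (Suc s) n (Suc d)" and lam: "lam = 0 # lam'" "length lam' = n"
  shows "lookup p (mon_at s lam) \<noteq> 0"
proof -
  have "lookup (subst_first s n p) (mon_at (Suc s) lam') \<noteq> 0"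
    using first unfolding top_coeff_nonzero_def
  proof (elim allE impE)
    show "\<forall>v\<in>comps n (Suc d). v \<noteq> lam' \<longrightarrow> meval (subst_first s n p) (tilde_at (Suc s) v) = 0"
      using van lam by (auto simp: meval_subst_first comps_def)
    show "meval (subst_first s n p) (tilde_at (Suc s) lam') \<noteq> 0"
      using nonzero lam by (simp add: meval_subst_first)
  qed (use lam lam_size in_vars_deg_on_subst_first[OF p] in \<open>auto simp: comps_def\<close>)
  then show ?thesis using lookup_mon_at_Cons_0[OF p] lam lam_size by simp
qed

lemma lookup_mon_at_nonzero_Suc_Cons:
  assumes first: "unisolvent (Suc s) n (Suc d)" and rest: "top_coeff_nonzero s (Suc n) d"
    and lam: "lam = Suc a # lam'" "length lam' = n"
  shows "lookup p (mon_at s lam) \<noteq> 0"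
proof -
  have r0: "subst_first s n p = 0"
    using first unfolding unisolvent_def
  proof (elim allE impE)
    show "\<forall>v\<in>comps n (Suc d). meval (subst_first s n p) (tilde_at (Suc s) v) = 0"
      using van lam by (auto simp: meval_subst_first comps_def)
  qed (rule in_vars_deg_on_subst_first[OF p])
  have "lookup (rotated_quot s n p) (mon_at s (lam' @ [a])) \<noteq> 0"
    using rest unfolding top_coeff_nonzero_def
  proof (elim allE impE)
    show "\<forall>w\<in>comps (Suc n) d. w \<noteq> lam' @ [a] \<longrightarrow> meval (rotated_quot s n p) (tilde_at s w) = 0"
    proof (intro ballI impI)
      fix w assume "w \<in> comps (Suc n) d" "w \<noteq> lam' @ [a]"
      moreover obtain b r' where "w = r' @ [b]" "length r' = n" "Suc b # r' \<in> comps (Suc n) (Suc d)"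
        using comps_snoc_cases[OF \<open>w \<in> comps (Suc n) d\<close>] by blast
      ultimately show "meval (rotated_quot s n p) (tilde_at s w) = 0"
        using van lam meval_rotated_quot[OF p r0, of r' b] by auto
    qed
    show "meval (rotated_quot s n p) (tilde_at s (lam' @ [a])) \<noteq> 0"
      using meval_rotated_quot[OF p r0 lam(2), of a] nonzero tilde_Suc_Cons_0_neq[of a lam' n] lam by simp
  qed (use lam lam_size in_vars_deg_on_rotated_quot[OF p] in \<open>auto simp: comps_def\<close>)
  then show ?thesis using lookup_mon_at_Suc_Cons[OF p r0 _ lam(2)] lam lam_size by simp
qed

end

lemma top_coeff_nonzero_step:
  assumes first: "unisolvent (Suc s) n (Suc d)" "top_coeff_nonzero (Suc s) n (Suc d)"
    and rest: "top_coeff_nonzero s (Suc n) d"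
  shows "top_coeff_nonzero s (Suc n) (Suc d)"
  unfolding top_coeff_nonzero_def
proof (intro allI impI)
  fix p lam
  assume lam: "lam \<in> comps (Suc n) (Suc d)" "sum_list lam = Suc d"
    and p: "in_vars_deg_on {s..<s + Suc n} (Suc d) p"
    and van: "\<forall>v\<in>comps (Suc n) (Suc d). v \<noteq> lam \<longrightarrow> meval p (tilde_at s v) = 0"
    and nonzero: "meval p (tilde_at s lam) \<noteq> 0"
  from lam(1) show "lookup p (mon_at s lam) \<noteq> 0"
  proof (cases rule: comps_Suc_Suc_cases)
    case (1 lam')
    then have "length lam' = n" by (simp add: comps_def)
    then show ?thesis by (rule lookup_mon_at_nonzero_Cons_0[OF p lam(2) van nonzero first(2) 1(1)])
  next
    case (2 a lam')
    show ?thesis by (rule lookup_mon_at_nonzero_Suc_Cons[OF p lam(2) van nonzero first(1) rest 2(1,2)])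
  qed
qed

lemma spectral_induct:
  assumes "\<And>s n d. n = 0 \<or> d = 0 \<Longrightarrow> P s n d"
    and "\<And>s n d. (\<And>e. P (Suc s) n e) \<Longrightarrow> P s (Suc n) d \<Longrightarrow> P s (Suc n) (Suc d)"
  shows "P s n d"
proof (induction n arbitrary: s d)
  case 0
  then show ?case by (rule assms(1)) simp
next
  case (Suc n s d)
  then show ?case by (induction d) (auto intro: assms)
qed

theorem unisolvent: "unisolvent s n d"
  by (induction s n d rule: spectral_induct) (auto intro: interpolation_trivial unisolvent_step)

theorem interpolating: "interpolating s n d"
  by (induction s n d rule: spectral_induct) (auto intro: interpolation_trivial interpolating_step)

theorem top_coeff_nonzero: "top_coeff_nonzero s n d"
  by (induction s n d rule: spectral_induct)
    (auto intro: interpolation_trivial top_coeff_nonzero_step unisolvent)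

section \<open>The Hecke relations\<close>

text \<open>At a point z with z_i \<noteq> z_(i+1), T_i acts on values as the following operator on functions
  of the point.\<close>

definition dl_coeff :: "K \<Rightarrow> K \<Rightarrow> K" where
  "dl_coeff x y = (tt * x - y) / (x - y)"

definition dl_fun :: "nat \<Rightarrow> ((nat \<Rightarrow> K) \<Rightarrow> K) \<Rightarrow> (nat \<Rightarrow> K) \<Rightarrow> K" where
  "dl_fun i F z = tt * F z - dl_coeff (z i) (z (Suc i)) * (F z - F (z \<circ> tau i))"

lemma meval_Top_eq_dl_fun:
  assumes "inj_on z {..<n}" "Suc i < n"
  shows "meval (Top i f) z = dl_fun i (meval f) z"
proof -
  have "z i \<noteq> z (Suc i)" using assms by (auto dest: inj_onD)
  then show ?thesis by (simp add: meval_Top dl_fun_def dl_coeff_def)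
qed

lemma inj_on_comp_tau:
  assumes "inj_on z {..<n}" "Suc j < n"
  shows "inj_on (z \<circ> tau j) {..<n}"
proof (rule inj_onI)
  fix a b assume "a \<in> {..<n}" "b \<in> {..<n}" "(z \<circ> tau j) a = (z \<circ> tau j) b"
  then have "tau j a = tau j b" using assms tau_less[OF assms(2)] by (auto dest: inj_onD)
  then show "a = b" by (rule transpose_eq_imp_eq)
qed

lemma dl_fun_cong:
  assumes "inj_on z {..<n}" "Suc i < n" "\<And>w. inj_on w {..<n} \<Longrightarrow> F w = G w"
  shows "dl_fun i F z = dl_fun i G z"
  using assms inj_on_comp_tau[OF assms(1,2)] by (simp add: dl_fun_def)

lemma dl_coeff_swap: "x \<noteq> y \<Longrightarrow> dl_coeff y x = tt + 1 - dl_coeff x y"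
  by (simp add: dl_coeff_def field_simps)

lemma dl_coeff_Yang_Baxter:
  assumes "a \<noteq> b" "a \<noteq> c" "b \<noteq> c"
  shows "(tt - dl_coeff a c) * (tt + 1 - dl_coeff a b - dl_coeff b c) =
    (tt - dl_coeff a b) * (tt - dl_coeff b c)"
proof -
  have nz: "a - b \<noteq> 0" "a - c \<noteq> 0" "b - c \<noteq> 0" using assms by auto
  have tt_minus: "tt - dl_coeff x y = y * (1 - tt) / (x - y)" if "x - y \<noteq> 0" for x y
    using that by (simp add: dl_coeff_def divide_simps) (simp add: algebra_simps)
  have one_minus: "1 - dl_coeff x y = x * (1 - tt) / (x - y)" if "x - y \<noteq> 0" for x y
    using that by (simp add: dl_coeff_def divide_simps) (simp add: algebra_simps)
  have "tt + 1 - dl_coeff a b - dl_coeff b c = (tt - dl_coeff a b) + (1 - dl_coeff b c)" by simp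
  also have "\<dots> = b * (1 - tt) * (a - c) / ((a - b) * (b - c))"
    using nz by (simp add: tt_minus one_minus divide_simps) (simp add: algebra_simps)
  finally show ?thesis using nz by (simp add: tt_minus divide_simps)
qed

text \<open>The operators on functions of three consecutive coordinates (x, y, u) corresponding to
  dl_fun i and dl_fun (i+1).\<close>

definition dl_left :: "(K \<Rightarrow> K \<Rightarrow> K \<Rightarrow> K) \<Rightarrow> K \<Rightarrow> K \<Rightarrow> K \<Rightarrow> K" where
  "dl_left H x y u = tt * H x y u - dl_coeff x y * (H x y u - H y x u)"

definition dl_right :: "(K \<Rightarrow> K \<Rightarrow> K \<Rightarrow> K) \<Rightarrow> K \<Rightarrow> K \<Rightarrow> K \<Rightarrow> K" where
  "dl_right H x y u = tt * H x y u - dl_coeff y u * (H x y u - H x u y)"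

lemma dl_left_quadratic:
  assumes "a \<noteq> b"
  shows "dl_left (dl_left H) a b c = (tt - 1) * dl_left H a b c + tt * H a b c"
  unfolding dl_left_def dl_coeff_swap[OF assms[symmetric]] by (simp add: algebra_simps)

lemma dl_left_right_braid:
  assumes "a \<noteq> b" "a \<noteq> c" "b \<noteq> c"
  shows "dl_left (dl_right (dl_left H)) a b c = dl_right (dl_left (dl_right H)) a b c"
proof -
  let ?A = "dl_coeff a b" and ?B = "dl_coeff b c" and ?C = "dl_coeff a c"
  have "dl_left (dl_right (dl_left H)) a b c - dl_right (dl_left (dl_right H)) a b c =
      ((tt - ?C) * (tt + 1 - ?A - ?B) - (tt - ?A) * (tt - ?B)) *
      ((?A - ?B) * H a b c - ?A * H b a c + ?B * H a c b)"
    unfolding dl_left_def dl_right_def dl_coeff_swap[OF assms(1)[symmetric]]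
      dl_coeff_swap[OF assms(2)[symmetric]] dl_coeff_swap[OF assms(3)[symmetric]]
    by (simp add: algebra_simps)
  then show ?thesis using dl_coeff_Yang_Baxter[OF assms] by simp
qed

definition upd3 :: "(nat \<Rightarrow> K) \<Rightarrow> nat \<Rightarrow> K \<Rightarrow> K \<Rightarrow> K \<Rightarrow> nat \<Rightarrow> K" where
  "upd3 z i x y u = z(i := x, Suc i := y, Suc (Suc i) := u)"

lemma dl_fun_upd3:
  "dl_fun i F (upd3 z i x y u) = dl_left (\<lambda>x y u. F (upd3 z i x y u)) x y u"
  "dl_fun (Suc i) F (upd3 z i x y u) = dl_right (\<lambda>x y u. F (upd3 z i x y u)) x y u"
proof -
  have "upd3 z i x y u \<circ> tau i = upd3 z i y x u" "upd3 z i x y u \<circ> tau (Suc i) = upd3 z i x u y"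
    by (auto simp: fun_eq_iff upd3_def transpose_def)
  then show "dl_fun i F (upd3 z i x y u) = dl_left (\<lambda>x y u. F (upd3 z i x y u)) x y u"
    "dl_fun (Suc i) F (upd3 z i x y u) = dl_right (\<lambda>x y u. F (upd3 z i x y u)) x y u"
    by (simp_all add: dl_fun_def dl_left_def dl_right_def upd3_def)
qed

lemma upd3_self: "upd3 z i (z i) (z (Suc i)) (z (Suc (Suc i))) = z"
  by (simp add: upd3_def)

lemma dl_fun_quadratic:
  assumes "z i \<noteq> z (Suc i)"
  shows "dl_fun i (dl_fun i F) z = (tt - 1) * dl_fun i F z + tt * F z"
proof -
  let ?z = "upd3 z i (z i) (z (Suc i)) (z (Suc (Suc i)))" and ?H = "\<lambda>x y u. F (upd3 z i x y u)"
  have "dl_fun i (dl_fun i F) ?z = dl_left (dl_left ?H) (z i) (z (Suc i)) (z (Suc (Suc i)))"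
    by (simp add: dl_fun_upd3)
  also have "\<dots> = (tt - 1) * dl_left ?H (z i) (z (Suc i)) (z (Suc (Suc i))) + tt * F ?z"
    by (rule dl_left_quadratic[OF assms])
  also have "\<dots> = (tt - 1) * dl_fun i F ?z + tt * F ?z"
    by (simp add: dl_fun_upd3)
  finally show ?thesis by (simp only: upd3_self)
qed

lemma dl_fun_braid:
  assumes "z i \<noteq> z (Suc i)" "z i \<noteq> z (Suc (Suc i))" "z (Suc i) \<noteq> z (Suc (Suc i))"
  shows "dl_fun i (dl_fun (Suc i) (dl_fun i F)) z = dl_fun (Suc i) (dl_fun i (dl_fun (Suc i) F)) z"
proof -
  let ?z = "upd3 z i (z i) (z (Suc i)) (z (Suc (Suc i)))" and ?H = "\<lambda>x y u. F (upd3 z i x y u)"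
  have "dl_fun i (dl_fun (Suc i) (dl_fun i F)) ?z =
      dl_left (dl_right (dl_left ?H)) (z i) (z (Suc i)) (z (Suc (Suc i)))"
    by (simp add: dl_fun_upd3)
  also have "\<dots> = dl_right (dl_left (dl_right ?H)) (z i) (z (Suc i)) (z (Suc (Suc i)))"
    by (rule dl_left_right_braid[OF assms])
  also have "\<dots> = dl_fun (Suc i) (dl_fun i (dl_fun (Suc i) F)) ?z"
    by (simp add: dl_fun_upd3)
  finally show ?thesis by (simp only: upd3_self)
qed

lemma dl_fun_commute:
  assumes "Suc i < j"
  shows "dl_fun i (dl_fun j F) z = dl_fun j (dl_fun i F) z"
proof -
  have "z \<circ> tau j \<circ> tau i = z \<circ> tau i \<circ> tau j"
    using assms by (auto simp: fun_eq_iff transpose_def)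
  moreover have "tau j i = i" "tau j (Suc i) = Suc i" "tau i j = j" "tau i (Suc j) = Suc j"
    using assms by (auto simp: transpose_def)
  ultimately show ?thesis by (simp add: dl_fun_def algebra_simps)
qed

lemma poly_eq_if_meval_tilde_eq:
  assumes "in_vars_deg_on {0..<n} d p" "in_vars_deg_on {0..<n} d q"
    and "\<And>v. v \<in> comps n d \<Longrightarrow> meval p (tilde v) = meval q (tilde v)"
  shows "p = q"
proof -
  have "p - q = 0"
    using unisolvent[of 0 n d, unfolded unisolvent_def add_0, rule_format,
        OF in_vars_deg_on_diff[OF assms(1,2)]] assms(3)
    by (simp add: meval_diff)
  then show ?thesis by simp
qed

lemma inj_on_tilde_comps: "v \<in> comps n d \<Longrightarrow> inj_on (tilde v) {..<n}"
  using inj_on_tilde[of v] by (simp add: comps_def)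

lemma in_vars_deg_on_Top_lessThan:
  "in_vars_deg_on {0..<n} d f \<Longrightarrow> Suc i < n \<Longrightarrow> in_vars_deg_on {0..<n} d (Top i f)"
  by (rule in_vars_deg_on_Top) auto

lemma meval_Top_Top:
  assumes "inj_on z {..<n}" "Suc i < n" "Suc j < n"
  shows "meval (Top i (Top j f)) z = dl_fun i (dl_fun j (meval f)) z"
  unfolding meval_Top_eq_dl_fun[OF assms(1,2)]
  by (rule dl_fun_cong[OF assms(1,2)]) (rule meval_Top_eq_dl_fun[OF _ assms(3)])

lemma meval_Top_Top_Top:
  assumes "inj_on z {..<n}" "Suc i < n" "Suc j < n" "Suc k < n"
  shows "meval (Top i (Top j (Top k f))) z = dl_fun i (dl_fun j (dl_fun k (meval f))) z"
  unfolding meval_Top_eq_dl_fun[OF assms(1,2)]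
  by (rule dl_fun_cong[OF assms(1,2)]) (rule meval_Top_Top[OF _ assms(3,4)])

theorem Top_quadratic:
  assumes "in_vars_deg_on {0..<n} d f" "Suc i < n"
  shows "Top i (Top i f) = mconst (tt - 1) * Top i f + mconst tt * f"
proof (rule poly_eq_if_meval_tilde_eq)
  fix v assume "v \<in> comps n d"
  then have z: "inj_on (tilde v) {..<n}" by (rule inj_on_tilde_comps)
  then have "tilde v i \<noteq> tilde v (Suc i)" using assms(2) by (auto dest: inj_onD)
  then show "meval (Top i (Top i f)) (tilde v) =
      meval (mconst (tt - 1) * Top i f + mconst tt * f) (tilde v)"
    using meval_Top_Top[OF z assms(2,2)] meval_Top_eq_dl_fun[OF z assms(2)]
    by (simp add: dl_fun_quadratic meval_add meval_mult)
qed (use assms in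
    \<open>intro in_vars_deg_on_add in_vars_deg_on_mconst_mult in_vars_deg_on_Top_lessThan; simp\<close>)+

theorem Top_commute:
  assumes "in_vars_deg_on {0..<n} d f" "Suc i < j" "Suc j < n"
  shows "Top i (Top j f) = Top j (Top i f)"
proof (rule poly_eq_if_meval_tilde_eq)
  fix v assume "v \<in> comps n d"
  then have z: "inj_on (tilde v) {..<n}" by (rule inj_on_tilde_comps)
  show "meval (Top i (Top j f)) (tilde v) = meval (Top j (Top i f)) (tilde v)"
    using meval_Top_Top[OF z, of i j f] meval_Top_Top[OF z, of j i f] dl_fun_commute[OF assms(2)] assms
    by simp
qed (use assms in \<open>intro in_vars_deg_on_Top_lessThan; simp\<close>)+

theorem Top_braid:
  assumes "in_vars_deg_on {0..<n} d f" "Suc (Suc i) < n"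
  shows "Top i (Top (Suc i) (Top i f)) = Top (Suc i) (Top i (Top (Suc i) f))"
proof (rule poly_eq_if_meval_tilde_eq)
  fix v assume "v \<in> comps n d"
  then have z: "inj_on (tilde v) {..<n}" by (rule inj_on_tilde_comps)
  then have "tilde v i \<noteq> tilde v (Suc i)" "tilde v i \<noteq> tilde v (Suc (Suc i))"
    "tilde v (Suc i) \<noteq> tilde v (Suc (Suc i))"
    using assms(2) by (auto dest: inj_onD)
  then show "meval (Top i (Top (Suc i) (Top i f))) (tilde v) =
      meval (Top (Suc i) (Top i (Top (Suc i) f))) (tilde v)"
    using meval_Top_Top_Top[OF z, of i "Suc i" i f] meval_Top_Top_Top[OF z, of "Suc i" i "Suc i" f]
      assms(2)
    by (simp add: dl_fun_braid)
qed (use assms in \<open>intro in_vars_deg_on_Top_lessThan; simp\<close>)+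

section \<open>The interpolation polynomial E*_\<lambda>\<close>

definition is_Estar :: "nat list \<Rightarrow> mpoly \<Rightarrow> bool" where
  "is_Estar lam p \<longleftrightarrow> in_vars_deg_on {0..<length lam} (sum_list lam) p \<and> lookup p (mon_at 0 lam) = 1 \<and>
     (\<forall>v\<in>comps (length lam) (sum_list lam). v \<noteq> lam \<longrightarrow> meval p (tilde v) = 0)"

lemma is_Estar_unique:
  assumes "is_Estar lam p1" "is_Estar lam p2"
  shows "p1 = p2"
proof -
  let ?n = "length lam" and ?d = "sum_list lam" and ?q = "p1 - p2"
  have q: "in_vars_deg_on {0..<?n} ?d ?q"
    using assms by (auto simp: is_Estar_def intro: in_vars_deg_on_diff)
  have van: "\<forall>v\<in>comps ?n ?d. v \<noteq> lam \<longrightarrow> meval ?q (tilde v) = 0"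
    using assms by (simp add: is_Estar_def meval_diff)
  have "meval ?q (tilde lam) = 0"
  proof (rule ccontr)
    assume "meval ?q (tilde lam) \<noteq> 0"
    then have "lookup ?q (mon_at 0 lam) \<noteq> 0"
      using top_coeff_nonzero[of 0 ?n ?d] q van unfolding top_coeff_nonzero_def by (simp add: comps_def)
    then show False using assms by (simp add: is_Estar_def lookup_minus)
  qed
  then have "?q = 0"
    using unisolvent[of 0 ?n ?d] q van unfolding unisolvent_def by auto
  then show ?thesis by simp
qed

lemma is_Estar_exists: "\<exists>p. is_Estar lam p"
proof -
  let ?n = "length lam" and ?d = "sum_list lam"
  obtain p where p: "in_vars_deg_on {0..<?n} ?d p"
    and delta: "\<forall>v\<in>comps ?n ?d. meval p (tilde v) = (if v = lam then 1 else 0)"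
    using interpolating[of 0 ?n ?d] unfolding interpolating_def
    by (elim allE[of _ "\<lambda>v. if v = lam then 1 else 0"]) auto
  have "lookup p (mon_at 0 lam) \<noteq> 0"
    using top_coeff_nonzero[of 0 ?n ?d] p delta unfolding top_coeff_nonzero_def by (simp add: comps_def)
  then have "is_Estar lam (mconst (inverse (lookup p (mon_at 0 lam))) * p)"
    using p delta by (auto simp: is_Estar_def in_vars_deg_on_mconst_mult lookup_mconst_mult meval_mult)
  then show ?thesis by blast
qed

lemma is_Estar_Estar: "is_Estar lam (Estar lam)"
proof -
  have spec: "(in_vars_deg (length lam) (sum_list lam) p \<and> mcoeff p lam = 1 \<and>
     (\<forall>nu. length nu = length lam \<and> sum_list nu \<le> sum_list lam \<and> nu \<noteq> lam
        \<longrightarrow> meval p (tilde nu) = 0)) = is_Estar lam p" for p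
    by (auto simp: is_Estar_def in_vars_deg_eq_on mcoeff_def mon_eq_mon_at comps_def)
  obtain p where p: "is_Estar lam p" using is_Estar_exists by blast
  have "Estar lam = p"
    unfolding Estar_def spec
    by (rule the_equality[where P = "is_Estar lam", OF p]) (rule is_Estar_unique[OF _ p])
  then show ?thesis using p by simp
qed

lemma in_vars_deg_on_Estar: "in_vars_deg_on {0..<length lam} (sum_list lam) (Estar lam)"
  using is_Estar_Estar[of lam] by (simp add: is_Estar_def)

lemma swapc_swapc: "Suc j < length v \<Longrightarrow> swapc j (swapc j v) = v"
  by (rule nth_equalityI) (auto simp: swapc_nth transpose_def)

lemma swapc_tie: "Suc j < length v \<Longrightarrow> v ! j = v ! Suc j \<Longrightarrow> swapc j v = v"
  by (rule nth_equalityI) (auto simp: swapc_nth transpose_def)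

lemma mset_swapc: "Suc j < length v \<Longrightarrow> mset (swapc j v) = mset v"
  unfolding swapc_def by (rule mset_swap) auto

lemma sum_list_swapc: "Suc j < length v \<Longrightarrow> sum_list (swapc j v) = sum_list v"
  by (metis mset_swapc sum_mset_sum_list)

text \<open>At a spectral point \<nu>~ either \<nu>_j = \<nu>_(j+1), and then t \<nu>~_j - \<nu>~_(j+1) = 0 kills the
  difference term of dl_fun, or s_j \<nu>~ is the spectral point of s_j \<nu> \<noteq> \<lambda>, where E*_\<lambda> vanishes as
  it does at \<nu>~.\<close>

theorem Top_Estar_tie:
  assumes "Suc j < length lam" "lam ! j = lam ! Suc j"
  shows "Top j (Estar lam) = mconst tt * Estar lam"
proof (rule poly_eq_if_meval_tilde_eq)
  let ?n = "length lam" and ?d = "sum_list lam" and ?E = "Estar lam"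
  have vanish: "\<And>v. v \<in> comps ?n ?d \<Longrightarrow> v \<noteq> lam \<Longrightarrow> meval ?E (tilde v) = 0"
    using is_Estar_Estar[of lam] by (simp add: is_Estar_def)
  fix v assume v: "v \<in> comps ?n ?d"
  then have length_v: "length v = ?n" by (simp add: comps_def)
  have "dl_coeff (tilde v j) (tilde v (Suc j)) * (meval ?E (tilde v) - meval ?E (tilde v \<circ> tau j)) = 0"
  proof (cases "v ! j = v ! Suc j")
    case True
    then have "tilde v (Suc j) = tt * tilde v j" using assms length_v by (intro tilde_Suc_if_tie) auto
    then show ?thesis by (simp add: dl_coeff_def)
  next
    case False
    then have "v \<noteq> lam" using assms by auto
    moreover have "swapc j v \<noteq> lam"
    proof
      assume "swapc j v = lam"
      then have "v = swapc j lam" using swapc_swapc[of j v] assms length_v by simp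
      then show False using swapc_tie[OF assms] \<open>v \<noteq> lam\<close> by simp
    qed
    moreover have "swapc j v \<in> comps ?n ?d"
      using v assms length_v by (simp add: comps_def sum_list_swapc)
    ultimately show ?thesis
      using vanish[OF v] vanish[of "swapc j v"] tilde_swapc[of j v] False assms length_v by simp
  qed
  then show "meval (Top j ?E) (tilde v) = meval (mconst tt * ?E) (tilde v)"
    using meval_Top_eq_dl_fun[OF inj_on_tilde_comps[OF v] assms(1)] by (simp add: dl_fun_def meval_mult)
qed (use assms in
    \<open>intro in_vars_deg_on_Top_lessThan in_vars_deg_on_mconst_mult in_vars_deg_on_Estar; simp\<close>)+

section \<open>The permutation \<sigma>_\<mu>\<close>

definition coinv :: "nat list \<Rightarrow> nat" where
  "coinv v = card {(p, r). p < r \<and> r < length v \<and> v ! p < v ! r}"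

lemma finite_index_pairs: "finite {(p, r). p < r \<and> r < (n::nat) \<and> P p r}"
  by (rule finite_subset[of _ "{..<n} \<times> {..<n}"]) auto

lemma tau_less_tau: "p < r \<Longrightarrow> (p, r) \<noteq> (i, Suc i) \<Longrightarrow> tau i p < tau i r"
  by (auto simp: transpose_def)

lemma coinv_swapc:
  assumes "Suc i < length v" "v ! i < v ! Suc i"
  shows "coinv (swapc i v) + 1 = coinv v"
proof -
  let ?n = "length v" and ?w = "swapc i v"
  let ?A = "{(p, r). p < r \<and> r < ?n \<and> ?w ! p < ?w ! r}"
  let ?B = "{(p, r). p < r \<and> r < ?n \<and> v ! p < v ! r}"
  let ?f = "\<lambda>(p, r). (tau i p, tau i r)"
  have i: "(i, Suc i) \<in> ?B" using assms by simp
  have "bij_betw ?f ?A (?B - {(i, Suc i)})"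
  proof (rule bij_betw_imageI)
    show "inj_on ?f ?A" by (auto simp: inj_on_def) (metis transpose_involutory)+
    show "?f ` ?A = ?B - {(i, Suc i)}"
    proof (intro equalityI subsetI)
      fix x assume "x \<in> ?f ` ?A"
      then obtain p r where x: "x = (tau i p, tau i r)" and pr: "p < r" "r < ?n" "?w ! p < ?w ! r" by auto
      have ne: "(p, r) \<noteq> (i, Suc i)" using pr assms by (auto simp: swapc_nth)
      then have "tau i p < tau i r" "(tau i p, tau i r) \<noteq> (i, Suc i)"
        using tau_less_tau[OF pr(1)] pr(1) by (auto simp: transpose_def split: if_splits)
      then show "x \<in> ?B - {(i, Suc i)}"
        using x pr assms tau_less[OF assms(1) pr(2)] by (simp add: swapc_nth)
    next
      fix x assume "x \<in> ?B - {(i, Suc i)}"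
      then obtain p r where x: "x = (p, r)"
        and pr: "p < r" "r < ?n" "v ! p < v ! r" "(p, r) \<noteq> (i, Suc i)" by auto
      have "(tau i p, tau i r) \<in> ?A"
        using pr assms tau_less_tau[OF pr(1,4)] tau_less[OF assms(1), of p] tau_less[OF assms(1) pr(2)]
        by (simp add: swapc_nth)
      then show "x \<in> ?f ` ?A" using x by force
    qed
  qed
  then have "card ?A = card ?B - 1"
    using i finite_index_pairs by (simp add: bij_betw_same_card card_Diff_singleton)
  then show ?thesis
    using i finite_index_pairs[of ?n] card_gt_0_iff[of ?B] unfolding coinv_def by fastforce
qed

lemma sorted_desc_if_no_ascent:
  "\<forall>i. Suc i < length v \<longrightarrow> \<not> v ! i < v ! Suc i \<Longrightarrow> sorted_wrt (\<ge>) (v::'a::linorder list)"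
  by (subst sorted_wrt_iff_nth_Suc_transp) (auto simp: transp_def not_less)

lemma sorted_desc_mset_eq:
  assumes "mset v = mset w" "sorted_wrt (\<ge>) v" "sorted_wrt (\<ge>) (w::'a::linorder list)"
  shows "v = w"
proof -
  have "sorted (rev v)" "sorted (rev w)" using assms by (simp_all add: sorted_wrt_rev)
  then have "sort (rev w) = rev v" "sort (rev w) = rev w"
    using assms(1) by (simp_all add: properties_for_sort)
  then show ?thesis by simp
qed

lemma perm_len_id: "perm_len n id = 0"
proof -
  have empty: "{(a, b). a < b \<and> b < n \<and> b < a} = {}" by auto
  show ?thesis by (simp add: perm_len_def empty)
qed

locale partition_shape =
  fixes lam :: "nat list"
  assumes sorted: "sorted_wrt (\<ge>) lam"
begin

lemma nth_antimono: "a < b \<Longrightarrow> b < length lam \<Longrightarrow> lam ! b \<le> lam ! a"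
  using sorted by (simp add: sorted_wrt_iff_nth_less)

lemma eq_lam_or_ascent:
  assumes "mset v = mset lam"
  obtains "v = lam" | i where "Suc i < length v" "v ! i < v ! Suc i"
  using sorted_desc_mset_eq[OF assms _ sorted] sorted_desc_if_no_ascent[of v] by blast

lemma length_eq_if_mset_eq: "mset v = mset lam \<Longrightarrow> length v = length lam"
  by (metis size_mset)

lemma mset_swapc_eq: "mset v = mset lam \<Longrightarrow> Suc i < length lam \<Longrightarrow> mset (swapc i v) = mset lam"
  using mset_swapc[of i v] length_eq_if_mset_eq[of v] by simp

lemma rearrangement_induct [consumes 1, case_names lam ascent]:
  assumes "mset v = mset lam" "P lam"
    and "\<And>v i. mset v = mset lam \<Longrightarrow> Suc i < length lam \<Longrightarrow> v ! i < v ! Suc i \<Longrightarrow> P (swapc i v) \<Longrightarrow> P v"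
  shows "P v"
  using assms(1)
proof (induction "coinv v" arbitrary: v rule: less_induct)
  case less
  from less.prems show ?case
  proof (cases rule: eq_lam_or_ascent)
    case (2 i)
    then show ?thesis
      using less.hyps[of "swapc i v"] coinv_swapc[OF 2] assms(3)[OF less.prems] mset_swapc_eq[OF less.prems]
        length_eq_if_mset_eq[OF less.prems]
      by simp
  qed (simp add: assms(2))
qed

definition rearranges :: "(nat \<Rightarrow> nat) \<Rightarrow> nat list \<Rightarrow> bool" where
  "rearranges \<sigma> v \<longleftrightarrow> \<sigma> permutes {..<length lam} \<and> actc \<sigma> lam = v"

text \<open>\<sigma>_\<mu> turns out to be the unique tie-preserving rearrangement of \<lambda> into \<mu>.\<close>

definition tie_preserving :: "(nat \<Rightarrow> nat) \<Rightarrow> bool" where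
  "tie_preserving \<sigma> \<longleftrightarrow> (\<forall>a b. a < b \<and> b < length lam \<and> lam ! a = lam ! b \<longrightarrow> \<sigma> a < \<sigma> b)"

lemma rearranges_length: "rearranges \<sigma> v \<Longrightarrow> length v = length lam"
  by (auto simp: rearranges_def actc_def)

lemma rearranges_less: "rearranges \<sigma> v \<Longrightarrow> a < length lam \<Longrightarrow> \<sigma> a < length lam"
  by (metis lessThan_iff permutes_in_image rearranges_def)

lemma rearranges_nth: "rearranges \<sigma> v \<Longrightarrow> a < length lam \<Longrightarrow> v ! (\<sigma> a) = lam ! a"
  by (auto simp: rearranges_def actc_def permutes_inverses rearranges_less)

lemma rearranges_inv: "rearranges \<sigma> v \<Longrightarrow> p < length lam \<Longrightarrow> inv \<sigma> p < length lam \<and> \<sigma> (inv \<sigma> p) = p"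
  by (auto simp: rearranges_def permutes_inverses) (metis lessThan_iff permutes_in_image permutes_inv)

lemma rearranges_inj: "rearranges \<sigma> v \<Longrightarrow> \<sigma> a = \<sigma> b \<Longrightarrow> a = b"
  by (auto simp: rearranges_def dest: permutes_inj injD)

lemma rearranges_id: "rearranges id lam"
  by (simp add: rearranges_def actc_def map_nth)

lemma rearranges_swapc:
  assumes \<sigma>: "rearranges \<sigma> v" and i: "Suc i < length lam"
  shows "rearranges (tau i \<circ> \<sigma>) (swapc i v)"
proof -
  have perm: "\<sigma> permutes {..<length lam}" using \<sigma> by (simp add: rearranges_def)
  have "actc (tau i \<circ> \<sigma>) lam = swapc i v"
  proof (rule nth_equalityI)
    fix j assume "j < length (actc (tau i \<circ> \<sigma>) lam)"
    then have j: "j < length lam" by (simp add: actc_def)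
    have "inv (tau i \<circ> \<sigma>) = inv \<sigma> \<circ> tau i"
      using perm by (simp add: o_inv_distrib permutes_bij)
    then have "actc (tau i \<circ> \<sigma>) lam ! j = lam ! inv \<sigma> (tau i j)" using j by (simp add: actc_def)
    also have "\<dots> = v ! tau i j"
      using \<sigma> tau_less[OF i j] by (auto simp: rearranges_def actc_def)
    also have "\<dots> = swapc i v ! j" using swapc_nth[of i v j] rearranges_length[OF \<sigma>] i j by simp
    finally show "actc (tau i \<circ> \<sigma>) lam ! j = swapc i v ! j" .
  qed (use rearranges_length[OF \<sigma>] in \<open>simp add: actc_def\<close>)
  moreover have "tau i \<circ> \<sigma> permutes {..<length lam}"
    by (rule permutes_compose[OF perm permutes_swap_id]) (use i in auto)
  ultimately show ?thesis by (simp add: rearranges_def)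
qed

lemma tie_preserving_id: "tie_preserving id"
  by (simp add: tie_preserving_def)

lemma tie_preserving_swapc:
  assumes \<sigma>: "rearranges \<sigma> v" "tie_preserving \<sigma>" and i: "Suc i < length lam" "v ! i \<noteq> v ! Suc i"
  shows "tie_preserving (tau i \<circ> \<sigma>)"
  unfolding tie_preserving_def
proof (intro allI impI)
  fix a b assume ab: "a < b \<and> b < length lam \<and> lam ! a = lam ! b"
  then have "(\<sigma> a, \<sigma> b) \<noteq> (i, Suc i)"
    using rearranges_nth[OF \<sigma>(1), of a] rearranges_nth[OF \<sigma>(1), of b] i(2) by auto
  then show "(tau i \<circ> \<sigma>) a < (tau i \<circ> \<sigma>) b"
    using \<sigma>(2) ab tau_less_tau by (simp add: tie_preserving_def)
qed

lemma tie_preserving_exists: "mset v = mset lam \<Longrightarrow> \<exists>\<sigma>. rearranges \<sigma> v \<and> tie_preserving \<sigma>"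
proof (induction v rule: rearrangement_induct)
  case lam
  then show ?case using rearranges_id tie_preserving_id by blast
next
  case (ascent v i)
  then obtain \<sigma> where "rearranges \<sigma> (swapc i v)" "tie_preserving \<sigma>" by blast
  then show ?case
    using rearranges_swapc[of \<sigma> "swapc i v" i] tie_preserving_swapc[of \<sigma> "swapc i v" i] ascent
      swapc_swapc[of i v] length_eq_if_mset_eq[of v]
    by (auto simp: swapc_nth)
qed

text \<open>A rearrangement of \<lambda> into v is determined on a by the number of earlier parts of \<lambda> equal
  to \<lambda>_a, if it preserves ties.\<close>

lemma card_ties_before:
  assumes \<sigma>: "rearranges \<sigma> v" "tie_preserving \<sigma>" and a: "a < length lam"
  shows "card {p. p < length lam \<and> v ! p = lam ! a \<and> p < \<sigma> a} = card {b. b < a \<and> lam ! b = lam ! a}"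
proof -
  have "\<sigma> ` {b. b < a \<and> lam ! b = lam ! a} = {p. p < length lam \<and> v ! p = lam ! a \<and> p < \<sigma> a}"
  proof (intro equalityI subsetI)
    fix x assume "x \<in> \<sigma> ` {b. b < a \<and> lam ! b = lam ! a}"
    then obtain b where b: "x = \<sigma> b" "b < a" "lam ! b = lam ! a" by auto
    then have "\<sigma> b < \<sigma> a" using \<sigma>(2) a by (simp add: tie_preserving_def)
    moreover have "\<sigma> b < length lam" "v ! \<sigma> b = lam ! b"
      using b a rearranges_less[OF \<sigma>(1), of b] rearranges_nth[OF \<sigma>(1), of b] by auto
    ultimately show "x \<in> {p. p < length lam \<and> v ! p = lam ! a \<and> p < \<sigma> a}" using b by simp
  next
    fix x assume x: "x \<in> {p. p < length lam \<and> v ! p = lam ! a \<and> p < \<sigma> a}"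
    define b where "b = inv \<sigma> x"
    have b: "b < length lam" "\<sigma> b = x" using rearranges_inv[OF \<sigma>(1), of x] x by (auto simp: b_def)
    have tie: "lam ! b = lam ! a" using rearranges_nth[OF \<sigma>(1) b(1)] b x by simp
    have "b < a"
    proof (rule ccontr)
      assume "\<not> b < a"
      then have "a < b" using b x by (cases "a = b") auto
      then have "\<sigma> a < \<sigma> b" using \<sigma>(2) b(1) tie by (simp add: tie_preserving_def)
      then show False using b x by simp
    qed
    then show "x \<in> \<sigma> ` {b. b < a \<and> lam ! b = lam ! a}" using b tie by auto
  qed
  moreover have "inj_on \<sigma> {b. b < a \<and> lam ! b = lam ! a}"
    by (auto simp: inj_on_def dest: rearranges_inj[OF \<sigma>(1)])
  ultimately show ?thesis using card_image by fastforce
qed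

lemma tie_preserving_unique:
  assumes \<sigma>: "rearranges \<sigma> v" "tie_preserving \<sigma>" and \<rho>: "rearranges \<rho> v" "tie_preserving \<rho>"
  shows "\<sigma> = \<rho>"
proof
  fix a
  show "\<sigma> a = \<rho> a"
  proof (cases "a < length lam")
    case False
    then show ?thesis using \<sigma> \<rho> unfolding rearranges_def by (metis lessThan_iff permutes_not_in)
  next
    case True
    let ?P = "{p. p < length lam \<and> v ! p = lam ! a}"
    have strict_mono: "card {p \<in> ?P. p < x} < card {p \<in> ?P. p < y}" if "x \<in> ?P" "x < y" for x y
      by (rule psubset_card_mono) (use that in auto)
    have in_P: "\<sigma> a \<in> ?P" "\<rho> a \<in> ?P"
      using rearranges_less[OF \<sigma>(1) True] rearranges_nth[OF \<sigma>(1) True]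
        rearranges_less[OF \<rho>(1) True] rearranges_nth[OF \<rho>(1) True]
      by auto
    have "card {p \<in> ?P. p < \<sigma> a} = card {p \<in> ?P. p < \<rho> a}"
      using card_ties_before[OF \<sigma> True] card_ties_before[OF \<rho> True] by (simp add: conj_assoc)
    then show ?thesis
      using strict_mono[OF in_P(1), of "\<rho> a"] strict_mono[OF in_P(2), of "\<sigma> a"]
      by (cases "\<sigma> a" "\<rho> a" rule: linorder_cases) auto
  qed
qed

definition tie_inversions :: "(nat \<Rightarrow> nat) \<Rightarrow> (nat \<times> nat) set" where
  "tie_inversions \<sigma> = {(a, b). a < b \<and> b < length lam \<and> \<sigma> a > \<sigma> b \<and> lam ! a = lam ! b}"

text \<open>An inversion of \<sigma> between unequal parts of \<lambda> is an ascent pair of v, read backwards.\<close>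

lemma card_strict_inversions:
  assumes \<sigma>: "rearranges \<sigma> v"
  shows "card {(a, b). a < b \<and> b < length lam \<and> \<sigma> a > \<sigma> b \<and> lam ! a \<noteq> lam ! b} = coinv v"
  unfolding coinv_def
proof (rule bij_betw_same_card[of "\<lambda>(a, b). (\<sigma> b, \<sigma> a)"], rule bij_betw_imageI)
  let ?I = "{(a, b). a < b \<and> b < length lam \<and> \<sigma> a > \<sigma> b \<and> lam ! a \<noteq> lam ! b}"
  have length_v: "length v = length lam" by (rule rearranges_length[OF \<sigma>])
  show "inj_on (\<lambda>(a, b). (\<sigma> b, \<sigma> a)) ?I"
    by (auto simp: inj_on_def dest: rearranges_inj[OF \<sigma>])
  show "(\<lambda>(a, b). (\<sigma> b, \<sigma> a)) ` ?I = {(p, r). p < r \<and> r < length v \<and> v ! p < v ! r}"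
  proof (intro equalityI subsetI)
    fix x assume "x \<in> (\<lambda>(a, b). (\<sigma> b, \<sigma> a)) ` ?I"
    then obtain a b where x: "x = (\<sigma> b, \<sigma> a)"
      and ab: "a < b" "b < length lam" "\<sigma> a > \<sigma> b" "lam ! a \<noteq> lam ! b"
      by auto
    have "lam ! b < lam ! a" using nth_antimono[OF ab(1,2)] ab(4) by simp
    then show "x \<in> {(p, r). p < r \<and> r < length v \<and> v ! p < v ! r}"
      using x ab rearranges_nth[OF \<sigma>, of a] rearranges_nth[OF \<sigma>, of b] rearranges_less[OF \<sigma>, of a]
        length_v
      by auto
  next
    fix x assume "x \<in> {(p, r). p < r \<and> r < length v \<and> v ! p < v ! r}"
    then obtain p r where x: "x = (p, r)" and pr: "p < r" "r < length lam" "v ! p < v ! r"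
      using length_v by auto
    define a b where "a = inv \<sigma> r" and "b = inv \<sigma> p"
    have a: "a < length lam" "\<sigma> a = r" using rearranges_inv[OF \<sigma> pr(2)] by (auto simp: a_def)
    have b: "b < length lam" "\<sigma> b = p" using rearranges_inv[OF \<sigma>, of p] pr by (auto simp: b_def)
    have "lam ! a = v ! r" "lam ! b = v ! p" using rearranges_nth[OF \<sigma>] a b by auto
    moreover have "a < b"
      using nth_antimono[of b a] a b pr calculation by (cases a b rule: linorder_cases) auto
    ultimately show "x \<in> (\<lambda>(a, b). (\<sigma> b, \<sigma> a)) ` ?I" using x a b pr by force
  qed
qed

lemma perm_len_eq_coinv_plus_tie_inversions:
  assumes "rearranges \<sigma> v"
  shows "perm_len (length lam) \<sigma> = coinv v + card (tie_inversions \<sigma>)"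
proof -
  let ?I = "{(a, b). a < b \<and> b < length lam \<and> \<sigma> a > \<sigma> b \<and> lam ! a \<noteq> lam ! b}"
  have "{(a, b). a < b \<and> b < length lam \<and> \<sigma> a > \<sigma> b} = ?I \<union> tie_inversions \<sigma>"
    by (auto simp: tie_inversions_def)
  moreover have "card (?I \<union> tie_inversions \<sigma>) = card ?I + card (tie_inversions \<sigma>)"
    by (rule card_Un_disjoint) (auto simp: tie_inversions_def finite_index_pairs)
  ultimately show ?thesis using card_strict_inversions[OF assms] by (simp add: perm_len_def)
qed

lemma tie_preserving_iff_no_tie_inversions:
  assumes "rearranges \<sigma> v"
  shows "tie_preserving \<sigma> \<longleftrightarrow> tie_inversions \<sigma> = {}"
proof
  show "tie_preserving \<sigma> \<Longrightarrow> tie_inversions \<sigma> = {}"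
    unfolding tie_preserving_def tie_inversions_def by force
  assume none: "tie_inversions \<sigma> = {}"
  show "tie_preserving \<sigma>"
    unfolding tie_preserving_def
  proof (intro allI impI)
    fix a b assume ab: "a < b \<and> b < length lam \<and> lam ! a = lam ! b"
    then have "\<not> \<sigma> a > \<sigma> b" using none unfolding tie_inversions_def by blast
    moreover have "\<sigma> a \<noteq> \<sigma> b" using ab rearranges_inj[OF assms, of a b] by auto
    ultimately show "\<sigma> a < \<sigma> b" by simp
  qed
qed

lemma coinv_le_perm_len: "rearranges \<sigma> v \<Longrightarrow> coinv v \<le> perm_len (length lam) \<sigma>"
  using perm_len_eq_coinv_plus_tie_inversions by simp

lemma perm_len_eq_coinv_iff:
  "rearranges \<sigma> v \<Longrightarrow> perm_len (length lam) \<sigma> = coinv v \<longleftrightarrow> tie_preserving \<sigma>"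
  using perm_len_eq_coinv_plus_tie_inversions[of \<sigma> v] tie_preserving_iff_no_tie_inversions[of \<sigma> v]
    card_eq_0_iff[of "tie_inversions \<sigma>"] finite_index_pairs
  unfolding tie_inversions_def by auto

abbreviation sigma :: "nat list \<Rightarrow> (nat \<Rightarrow> nat)" where
  "sigma v \<equiv> sigma_of lam v"

lemma sigma_spec:
  assumes "mset v = mset lam"
  shows "rearranges (sigma v) v" "tie_preserving (sigma v)" "perm_len (length lam) (sigma v) = coinv v"
proof -
  obtain \<sigma> where \<sigma>: "rearranges \<sigma> v" "tie_preserving \<sigma>" using tie_preserving_exists[OF assms] by blast
  have eq: "(\<lambda>\<sigma>. \<sigma> permutes {..<length lam} \<and> actc \<sigma> lam = v) = (\<lambda>\<sigma>. rearranges \<sigma> v)"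
    by (simp add: rearranges_def fun_eq_iff)
  show arr: "rearranges (sigma v) v"
    unfolding sigma_of_def eq by (rule arg_min_natI[of "\<lambda>\<sigma>. rearranges \<sigma> v", OF \<sigma>(1)])
  have "perm_len (length lam) (sigma v) \<le> perm_len (length lam) \<sigma>"
    unfolding sigma_of_def eq by (rule arg_min_nat_le[of "\<lambda>\<sigma>. rearranges \<sigma> v", OF \<sigma>(1)])
  then show len: "perm_len (length lam) (sigma v) = coinv v"
    using perm_len_eq_coinv_iff[OF \<sigma>(1)] \<sigma>(2) coinv_le_perm_len[OF arr] by simp
  show "tie_preserving (sigma v)" using perm_len_eq_coinv_iff[OF arr] len by simp
qed

lemma sigma_lam: "sigma lam = id"
  using tie_preserving_unique[OF sigma_spec(1,2) rearranges_id tie_preserving_id] by simp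

lemma sigma_swapc:
  assumes "mset v = mset lam" "Suc i < length lam" "v ! i \<noteq> v ! Suc i"
  shows "sigma (swapc i v) = tau i \<circ> sigma v"
  using tie_preserving_unique[OF sigma_spec(1,2)[OF mset_swapc_eq[OF assms(1,2)]]
      rearranges_swapc[OF sigma_spec(1)[OF assms(1)] assms(2)]
      tie_preserving_swapc[OF sigma_spec(1,2)[OF assms(1)] assms(2,3)]] .

end

section \<open>Reduced words and the polynomials f*_\<mu>\<close>

lemma perm_len_tau_comp_le:
  assumes \<tau>: "\<tau> permutes {..<n}"
  shows "perm_len n (tau j \<circ> \<tau>) \<le> perm_len n \<tau> + 1"
proof -
  let ?J = "{(a, b). a < b \<and> b < n \<and> \<tau> a > \<tau> b}"
  let ?J' = "{(a, b). a < b \<and> b < n \<and> (tau j \<circ> \<tau>) a > (tau j \<circ> \<tau>) b}"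
  have "?J' \<subseteq> insert (inv \<tau> j, inv \<tau> (Suc j)) ?J"
  proof
    fix x assume "x \<in> ?J'"
    then obtain a b where x: "x = (a, b)" and ab: "a < b" "b < n" "tau j (\<tau> a) > tau j (\<tau> b)" by auto
    show "x \<in> insert (inv \<tau> j, inv \<tau> (Suc j)) ?J"
    proof (cases "\<tau> a > \<tau> b")
      case False
      have "\<tau> a \<noteq> \<tau> b" using ab permutes_inj[OF \<tau>] by (auto dest: injD)
      then have "\<tau> a < \<tau> b" using False by simp
      then have "(\<tau> a, \<tau> b) = (j, Suc j)"
        using tau_less_tau[of "\<tau> a" "\<tau> b" j] ab(3) by (metis less_asym)
      then have "a = inv \<tau> j" "b = inv \<tau> (Suc j)"
        using permutes_inverses(2)[OF \<tau>] by (metis prod.inject)+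
      then show ?thesis using x by simp
    qed (use x ab in auto)
  qed
  then have "card ?J' \<le> card (insert (inv \<tau> j, inv \<tau> (Suc j)) ?J)"
    by (intro card_mono) (simp add: finite_index_pairs)
  also have "\<dots> \<le> card ?J + 1" by (simp add: card_insert_if finite_index_pairs)
  finally show ?thesis by (simp add: perm_len_def)
qed

lemma word_perm_Nil [simp]: "word_perm [] = id"
  by (simp add: word_perm_def)

lemma word_perm_Cons [simp]: "word_perm (i # w) = tau i \<circ> word_perm w"
  by (simp add: word_perm_def)

lemma word_perm_permutes: "\<forall>i\<in>set w. Suc i < n \<Longrightarrow> word_perm w permutes {..<n}"
  by (induction w) (auto intro!: permutes_compose permutes_swap_id)

lemma perm_len_word_perm_le: "\<forall>i\<in>set w. Suc i < n \<Longrightarrow> perm_len n (word_perm w) \<le> length w"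
proof (induction w)
  case (Cons i w)
  then show ?case
    using perm_len_tau_comp_le[OF word_perm_permutes, of w n i] by (simp add: comp_def)
qed (simp add: perm_len_id)

lemma tau_tau_comp: "tau i \<circ> (tau i \<circ> f) = f"
  by (simp add: fun_eq_iff)

lemma swapc_commute: "Suc i < j \<Longrightarrow> Suc j < length v \<Longrightarrow> swapc i (swapc j v) = swapc j (swapc i v)"
  by (rule nth_equalityI) (auto simp: swapc_nth transpose_def)

lemma swapc_braid: "Suc (Suc i) < length v \<Longrightarrow>
   swapc i (swapc (Suc i) (swapc i v)) = swapc (Suc i) (swapc i (swapc (Suc i) v))"
  by (rule nth_equalityI) (auto simp: swapc_nth transpose_def)

lemma Top_braid_eigen:
  assumes "in_vars_deg_on {0..<n} d g" "Suc (Suc i) < n" "{k, l} = {i, Suc i}"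
    and "Top l g = mconst tt * g"
  shows "Top k (Top l (Top k g)) = mconst tt * Top l (Top k g)"
proof -
  have "Top k (Top l (Top k g)) = Top l (Top k (Top l g))"
    using Top_braid[OF assms(1,2)] assms(3) by (auto simp: doubleton_eq_iff)
  then show ?thesis by (simp add: assms(4) Top_mconst_mult)
qed

context partition_shape
begin

lemma coinv_swapc_less:
  assumes "mset v = mset lam" "Suc i < length lam" "v ! i < v ! Suc i"
  shows "coinv (swapc i v) < coinv v"
  using coinv_swapc[of i v] assms(2,3) length_eq_if_mset_eq[OF assms(1)] by simp

lemma reduced_word_Cons:
  assumes v: "mset v = mset lam" and i: "Suc i < length lam" "v ! i < v ! Suc i"
    and w: "reduced_word (length lam) (sigma (swapc i v)) w"
  shows "reduced_word (length lam) (sigma v) (i # w)"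
proof -
  have "sigma (swapc i v) = tau i \<circ> sigma v" using sigma_swapc[OF v i(1)] i(2) by simp
  then have "word_perm (i # w) = sigma v" using w by (simp add: reduced_word_def tau_tau_comp)
  moreover have "length (i # w) = perm_len (length lam) (sigma v)"
    using w sigma_spec(3)[OF mset_swapc_eq[OF v i(1)]] sigma_spec(3)[OF v] coinv_swapc[of i v] i
      length_eq_if_mset_eq[OF v]
    by (simp add: reduced_word_def)
  ultimately show ?thesis using w i by (simp add: reduced_word_def)
qed

lemma reduced_word_exists: "mset v = mset lam \<Longrightarrow> \<exists>w. reduced_word (length lam) (sigma v) w"
proof (induction v rule: rearrangement_induct)
  case lam
  have "reduced_word (length lam) (sigma lam) []" by (simp add: reduced_word_def sigma_lam perm_len_id)
  then show ?case by blast
next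
  case (ascent v i)
  then show ?case using reduced_word_Cons[OF ascent(1-3)] by blast
qed

text \<open>A reduced word of \<sigma>_v can only start with an ascent of v: at a descent or a tie the
  remaining word would be too short for s_i \<sigma>_v.\<close>

lemma reduced_word_ConsD:
  assumes v: "mset v = mset lam" and w: "reduced_word (length lam) (sigma v) (i # w)"
  shows "Suc i < length lam" "v ! i < v ! Suc i" "reduced_word (length lam) (sigma (swapc i v)) w"
proof -
  have length_v: "length v = length lam" by (rule length_eq_if_mset_eq[OF v])
  show i: "Suc i < length lam" using w by (simp add: reduced_word_def)
  have letters: "\<forall>k\<in>set w. Suc k < length lam" using w by (simp add: reduced_word_def)
  have perm: "word_perm w = tau i \<circ> sigma v"
    using w by (simp add: reduced_word_def) (metis tau_tau_comp)
  have len: "length w + 1 = coinv v" using w sigma_spec(3)[OF v] by (simp add: reduced_word_def)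
  have short: "perm_len (length lam) (tau i \<circ> sigma v) \<le> length w"
    using perm_len_word_perm_le[OF letters] perm by simp
  have v': "mset (swapc i v) = mset lam" by (rule mset_swapc_eq[OF v i])
  show asc: "v ! i < v ! Suc i"
  proof -
    consider "v ! i > v ! Suc i" | "v ! i = v ! Suc i" | "v ! i < v ! Suc i" by linarith
    then show ?thesis
    proof cases
      case 1
      have "coinv (swapc i (swapc i v)) + 1 = coinv (swapc i v)"
        using coinv_swapc[of i "swapc i v"] i length_v 1 by (simp add: swapc_nth)
      then show ?thesis
        using short sigma_swapc[OF v i] 1 sigma_spec(3)[OF v'] len swapc_swapc[of i v] i length_v by simp
    next
      case 2
      have "rearranges (tau i \<circ> sigma v) v"
        using rearranges_swapc[OF sigma_spec(1)[OF v] i] swapc_tie[of i v] 2 i length_v by simp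
      then show ?thesis using coinv_le_perm_len short len by fastforce
    qed
  qed
  show "reduced_word (length lam) (sigma (swapc i v)) w"
    using letters perm sigma_swapc[OF v i] asc sigma_spec(3)[OF v'] len coinv_swapc[of i v] i length_v
    by (simp add: reduced_word_def)
qed

lemma in_vars_deg_on_foldr_Top:
  "\<forall>k\<in>set w. Suc k < length lam \<Longrightarrow>
    in_vars_deg_on {0..<length lam} (sum_list lam) (foldr Top w (Estar lam))"
  by (induction w) (simp_all add: in_vars_deg_on_Estar in_vars_deg_on_Top_lessThan)

definition reduced_words_agree :: "nat list \<Rightarrow> bool" where
  "reduced_words_agree v \<longleftrightarrow> (\<forall>w1 w2. reduced_word (length lam) (sigma v) w1 \<longrightarrow>
     reduced_word (length lam) (sigma v) w2 \<longrightarrow> foldr Top w1 (Estar lam) = foldr Top w2 (Estar lam))"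

lemma reduced_words_agreeD:
  "reduced_words_agree v \<Longrightarrow> reduced_word (length lam) (sigma v) w1 \<Longrightarrow>
    reduced_word (length lam) (sigma v) w2 \<Longrightarrow> foldr Top w1 (Estar lam) = foldr Top w2 (Estar lam)"
  unfolding reduced_words_agree_def by blast

text \<open>Two reduced words of \<sigma>_v starting with different ascents i < j are compared through a common
  reduced word of \<sigma>_\<rho>, where \<rho> sorts v at both ascents (Matsumoto's argument).\<close>

lemma foldr_Top_distant_ascents:
  assumes IH: "\<And>v'. coinv v' < coinv v \<Longrightarrow> mset v' = mset lam \<Longrightarrow> reduced_words_agree v'"
    and v: "mset v = mset lam" and ij: "Suc i < j" "Suc j < length lam"
    and asc: "v ! i < v ! Suc i" "v ! j < v ! Suc j"
    and w: "reduced_word (length lam) (sigma (swapc i v)) w1"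
      "reduced_word (length lam) (sigma (swapc j v)) w2"
  shows "Top i (foldr Top w1 (Estar lam)) = Top j (foldr Top w2 (Estar lam))"
proof -
  have length_v: "length v = length lam" by (rule length_eq_if_mset_eq[OF v])
  have i: "Suc i < length lam" using ij by simp
  let ?v1 = "swapc i v" and ?v2 = "swapc j v" and ?\<rho> = "swapc j (swapc i v)"
  have v1: "mset ?v1 = mset lam" and v2: "mset ?v2 = mset lam"
    using mset_swapc_eq[OF v] ij by auto
  obtain u where u: "reduced_word (length lam) (sigma ?\<rho>) u"
    using reduced_word_exists[OF mset_swapc_eq[OF v1 ij(2)]] by blast
  have "?v1 ! j < ?v1 ! Suc j" "?v2 ! i < ?v2 ! Suc i"
    using asc ij length_v by (simp_all add: swapc_nth transpose_def)
  moreover have "swapc i ?v2 = ?\<rho>" using swapc_commute[OF ij(1), of v] ij length_v by simp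
  ultimately have "reduced_word (length lam) (sigma ?v1) (j # u)"
    "reduced_word (length lam) (sigma ?v2) (i # u)"
    using reduced_word_Cons[OF v1 ij(2) _ u] reduced_word_Cons[OF v2 i, of u] u by simp_all
  then have "foldr Top w1 (Estar lam) = Top j (foldr Top u (Estar lam))"
    "foldr Top w2 (Estar lam) = Top i (foldr Top u (Estar lam))"
    using reduced_words_agreeD[OF IH[OF coinv_swapc_less[OF v i asc(1)] v1] w(1)]
      reduced_words_agreeD[OF IH[OF coinv_swapc_less[OF v ij(2) asc(2)] v2] w(2)]
    by simp_all
  then show ?thesis
    using Top_commute[OF in_vars_deg_on_foldr_Top ij] u by (simp add: reduced_word_def)
qed

lemma foldr_Top_adjacent_ascents:
  assumes IH: "\<And>v'. coinv v' < coinv v \<Longrightarrow> mset v' = mset lam \<Longrightarrow> reduced_words_agree v'"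
    and v: "mset v = mset lam" and i: "Suc (Suc i) < length lam"
    and asc: "v ! i < v ! Suc i" "v ! Suc i < v ! Suc (Suc i)"
    and w: "reduced_word (length lam) (sigma (swapc i v)) w1"
      "reduced_word (length lam) (sigma (swapc (Suc i) v)) w2"
  shows "Top i (foldr Top w1 (Estar lam)) = Top (Suc i) (foldr Top w2 (Estar lam))"
proof -
  have length_v: "length v = length lam" by (rule length_eq_if_mset_eq[OF v])
  have i': "Suc i < length lam" using i by simp
  let ?v1 = "swapc i v" and ?v2 = "swapc (Suc i) v"
  let ?v12 = "swapc (Suc i) ?v1" and ?v21 = "swapc i ?v2" and ?\<rho> = "swapc i (swapc (Suc i) ?v1)"
  have v1: "mset ?v1 = mset lam" and v2: "mset ?v2 = mset lam"
    and v12: "mset ?v12 = mset lam" and v21: "mset ?v21 = mset lam"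
    using mset_swapc_eq[OF v] mset_swapc_eq[OF mset_swapc_eq[OF v]] i by auto
  obtain u where u: "reduced_word (length lam) (sigma ?\<rho>) u"
    using reduced_word_exists[OF mset_swapc_eq[OF v12 i']] by blast
  have asc': "?v12 ! i < ?v12 ! Suc i" "?v1 ! Suc i < ?v1 ! Suc (Suc i)"
    "?v21 ! Suc i < ?v21 ! Suc (Suc i)" "?v2 ! i < ?v2 ! Suc i"
    using asc i length_v by (simp_all add: swapc_nth transpose_def)
  have "reduced_word (length lam) (sigma ?v1) (Suc i # i # u)"
    by (rule reduced_word_Cons[OF v1 i asc'(2) reduced_word_Cons[OF v12 i' asc'(1) u]])
  moreover have "swapc (Suc i) ?v21 = ?\<rho>" using swapc_braid[of i v] i length_v by simp
  then have "reduced_word (length lam) (sigma ?v2) (i # Suc i # u)"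
    using reduced_word_Cons[OF v2 i' asc'(4) reduced_word_Cons[OF v21 i asc'(3)]] u by simp
  ultimately have "foldr Top w1 (Estar lam) = Top (Suc i) (Top i (foldr Top u (Estar lam)))"
    "foldr Top w2 (Estar lam) = Top i (Top (Suc i) (foldr Top u (Estar lam)))"
    using reduced_words_agreeD[OF IH[OF coinv_swapc_less[OF v i' asc(1)] v1] w(1)]
      reduced_words_agreeD[OF IH[OF coinv_swapc_less[OF v i asc(2)] v2] w(2)]
    by simp_all
  then show ?thesis
    using Top_braid[OF in_vars_deg_on_foldr_Top i] u by (simp add: reduced_word_def)
qed

lemma foldr_Top_Cons_agree:
  assumes IH: "\<And>v'. coinv v' < coinv v \<Longrightarrow> mset v' = mset lam \<Longrightarrow> reduced_words_agree v'"
    and v: "mset v = mset lam"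
    and w: "reduced_word (length lam) (sigma v) (i # u1)" "reduced_word (length lam) (sigma v) (j # u2)"
  shows "Top i (foldr Top u1 (Estar lam)) = Top j (foldr Top u2 (Estar lam))"
proof -
  note head1 = reduced_word_ConsD[OF v w(1)] and head2 = reduced_word_ConsD[OF v w(2)]
  consider "i = j" | "Suc i < j" | "j = Suc i" | "Suc j < i" | "i = Suc j" by linarith
  then show ?thesis
  proof cases
    case 1
    have "reduced_words_agree (swapc i v)"
      by (rule IH[OF coinv_swapc_less[OF v head1(1,2)] mset_swapc_eq[OF v head1(1)]])
    from reduced_words_agreeD[OF this head1(3)] head2(3) 1 show ?thesis by simp
  next
    case 2
    show ?thesis
      by (rule foldr_Top_distant_ascents[OF IH v 2 head2(1) head1(2) head2(2) head1(3) head2(3)])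
  next
    case 3
    from head2 have j: "Suc (Suc i) < length lam" "v ! Suc i < v ! Suc (Suc i)"
      "reduced_word (length lam) (sigma (swapc (Suc i) v)) u2"
      unfolding 3 by simp_all
    show ?thesis
      unfolding 3 by (rule foldr_Top_adjacent_ascents[OF IH v j(1) head1(2) j(2) head1(3) j(3)])
  next
    case 4
    show ?thesis
      by (rule foldr_Top_distant_ascents[OF IH v 4 head1(1) head2(2) head1(2) head2(3) head1(3), symmetric])
  next
    case 5
    from head1 have i: "Suc (Suc j) < length lam" "v ! Suc j < v ! Suc (Suc j)"
      "reduced_word (length lam) (sigma (swapc (Suc j) v)) u1"
      unfolding 5 by simp_all
    show ?thesis
      unfolding 5
      by (rule foldr_Top_adjacent_ascents[OF IH v i(1) head2(2) i(2) head2(3) i(3), symmetric])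
  qed
qed

lemma reduced_words_agree: "mset v = mset lam \<Longrightarrow> reduced_words_agree v"
proof (induction "coinv v" arbitrary: v rule: less_induct)
  case less
  show ?case
    unfolding reduced_words_agree_def
  proof (intro allI impI)
    fix w1 w2 assume w: "reduced_word (length lam) (sigma v) w1" "reduced_word (length lam) (sigma v) w2"
    then have "length w1 = length w2" by (simp add: reduced_word_def)
    then consider "w1 = []" "w2 = []" | i u1 j u2 where "w1 = i # u1" "w2 = j # u2"
      by (cases w1; cases w2) auto
    then show "foldr Top w1 (Estar lam) = foldr Top w2 (Estar lam)"
    proof cases
      case (2 i u1 j u2)
      then show ?thesis using foldr_Top_Cons_agree[OF less.hyps less.prems w[unfolded 2]] by simp
    qed simp
  qed
qed

lemma fstar_eq_foldr_Top:
  assumes "mset v = mset lam" "reduced_word (length lam) (sigma v) w"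
  shows "fstar lam v = foldr Top w (Estar lam)"
proof -
  have "reduced_word (length lam) (sigma v) (SOME w. reduced_word (length lam) (sigma v) w)"
    using reduced_word_exists[OF assms(1)] by (rule someI_ex)
  then show ?thesis
    unfolding fstar_def Tperm_def
    by (rule reduced_words_agreeD[OF reduced_words_agree[OF assms(1)] _ assms(2)])
qed

lemma in_vars_deg_on_fstar:
  assumes "mset v = mset lam"
  shows "in_vars_deg_on {0..<length lam} (sum_list lam) (fstar lam v)"
proof -
  obtain w where w: "reduced_word (length lam) (sigma v) w" using reduced_word_exists[OF assms] by blast
  then show ?thesis
    using fstar_eq_foldr_Top[OF assms w] in_vars_deg_on_foldr_Top[of w] by (simp add: reduced_word_def)
qed

lemma fstar_lam: "fstar lam lam = Estar lam"
  using fstar_eq_foldr_Top[of lam "[]"] by (simp add: reduced_word_def sigma_lam perm_len_id)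

lemma fstar_ascent:
  assumes v: "mset v = mset lam" and j: "Suc j < length lam" "v ! j < v ! Suc j"
  shows "fstar lam v = Top j (fstar lam (swapc j v))"
proof -
  have v': "mset (swapc j v) = mset lam" by (rule mset_swapc_eq[OF v j(1)])
  obtain u where u: "reduced_word (length lam) (sigma (swapc j v)) u"
    using reduced_word_exists[OF v'] by blast
  then have "reduced_word (length lam) (sigma v) (j # u)" by (rule reduced_word_Cons[OF v j])
  then show ?thesis using fstar_eq_foldr_Top[OF v] fstar_eq_foldr_Top[OF v' u] by simp
qed

lemma Top_fstar_descent:
  assumes v: "mset v = mset lam" and i: "Suc i < length lam" "v ! i > v ! Suc i"
  shows "Top i (fstar lam v) = fstar lam (swapc i v)"
  using fstar_ascent[OF mset_swapc_eq[OF v i(1)] i(1)] swapc_swapc[of i v] i length_eq_if_mset_eq[OF v]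
  by (simp add: swapc_nth)

lemma Top_fstar_ascent:
  assumes v: "mset v = mset lam" and i: "Suc i < length lam" "v ! i < v ! Suc i"
  shows "Top i (fstar lam v) = mconst (tt - 1) * fstar lam v + mconst tt * fstar lam (swapc i v)"
  using Top_quadratic[OF in_vars_deg_on_fstar[OF mset_swapc_eq[OF v i(1)]] i(1)] fstar_ascent[OF v i]
  by simp

definition ties_eigen :: "nat list \<Rightarrow> bool" where
  "ties_eigen v \<longleftrightarrow> (\<forall>k. Suc k < length lam \<longrightarrow> v ! k = v ! Suc k \<longrightarrow>
     Top k (fstar lam v) = mconst tt * fstar lam v)"

lemma ties_eigenD:
  "ties_eigen v \<Longrightarrow> Suc k < length lam \<Longrightarrow> v ! k = v ! Suc k \<Longrightarrow> Top k (fstar lam v) = mconst tt * fstar lam v"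
  unfolding ties_eigen_def by blast

text \<open>The tie at i is moved to \<lambda> along an ascent j of v: f*_v = T_j f*_(s_j v), and the relation at
  the tie of s_j v (or of s_i s_j v if j is adjacent to i) is transported back by the commutation
  (or braid) relation.\<close>

lemma Top_fstar_tie_distant:
  assumes IH: "\<And>v'. coinv v' < coinv v \<Longrightarrow> mset v' = mset lam \<Longrightarrow> ties_eigen v'"
    and v: "mset v = mset lam" and i: "Suc i < length lam" "v ! i = v ! Suc i"
    and j: "Suc j < length lam" "v ! j < v ! Suc j" and ij: "Suc i < j \<or> Suc j < i"
  shows "Top i (fstar lam v) = mconst tt * fstar lam v"
proof -
  let ?v1 = "swapc j v"
  have v1: "mset ?v1 = mset lam" by (rule mset_swapc_eq[OF v j(1)])
  have "?v1 ! i = ?v1 ! Suc i"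
    using i j ij length_eq_if_mset_eq[OF v] by (auto simp: swapc_nth transpose_def)
  then have "Top i (fstar lam ?v1) = mconst tt * fstar lam ?v1"
    by (rule ties_eigenD[OF IH[OF coinv_swapc_less[OF v j] v1] i(1)])
  moreover have "Top i (Top j (fstar lam ?v1)) = Top j (Top i (fstar lam ?v1))"
    using ij i j Top_commute[OF in_vars_deg_on_fstar[OF v1], of i j]
      Top_commute[OF in_vars_deg_on_fstar[OF v1], of j i]
    by auto
  ultimately show ?thesis using fstar_ascent[OF v j] by (simp add: Top_mconst_mult)
qed

lemma Top_fstar_tie_adjacent:
  assumes IH: "\<And>v'. coinv v' < coinv v \<Longrightarrow> mset v' = mset lam \<Longrightarrow> ties_eigen v'"
    and v: "mset v = mset lam" and i: "Suc i < length lam" "v ! i = v ! Suc i"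
    and j: "Suc j < length lam" "v ! j < v ! Suc j" and ij: "j = Suc i \<or> i = Suc j"
  shows "Top i (fstar lam v) = mconst tt * fstar lam v"
proof -
  let ?v1 = "swapc j v" and ?\<rho> = "swapc i (swapc j v)"
  have length_v: "length v = length lam" by (rule length_eq_if_mset_eq[OF v])
  have v1: "mset ?v1 = mset lam" by (rule mset_swapc_eq[OF v j(1)])
  have \<rho>: "mset ?\<rho> = mset lam" by (rule mset_swapc_eq[OF v1 i(1)])
  have asc: "?v1 ! i < ?v1 ! Suc i" and tie: "?\<rho> ! j = ?\<rho> ! Suc j"
    using i j ij length_v by (auto simp: swapc_nth transpose_def)
  have "coinv ?\<rho> < coinv v"
    using coinv_swapc_less[OF v1 i(1) asc] coinv_swapc_less[OF v j] by simp
  then have "Top j (fstar lam ?\<rho>) = mconst tt * fstar lam ?\<rho>"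
    by (rule ties_eigenD[OF IH[OF _ \<rho>] j(1) tie])
  moreover have "Suc (Suc (min i j)) < length lam" "{i, j} = {min i j, Suc (min i j)}"
    using i j ij by auto
  ultimately have "Top i (Top j (Top i (fstar lam ?\<rho>))) = mconst tt * Top j (Top i (fstar lam ?\<rho>))"
    by (rule Top_braid_eigen[OF in_vars_deg_on_fstar[OF \<rho>], rotated 2])
  then show ?thesis using fstar_ascent[OF v j] fstar_ascent[OF v1 i(1) asc] by simp
qed

lemma ties_eigen: "mset v = mset lam \<Longrightarrow> ties_eigen v"
proof (induction "coinv v" arbitrary: v rule: less_induct)
  case less
  note v = less.prems
  show ?case
    unfolding ties_eigen_def
  proof (intro allI impI)
    fix i assume i: "Suc i < length lam" "v ! i = v ! Suc i"
    from v show "Top i (fstar lam v) = mconst tt * fstar lam v"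
    proof (cases rule: eq_lam_or_ascent)
      case 1
      then show ?thesis using Top_Estar_tie[OF i(1)] i(2) fstar_lam by simp
    next
      case (2 j)
      then have j: "Suc j < length lam" "v ! j < v ! Suc j" using length_eq_if_mset_eq[OF v] by simp_all
      have "j \<noteq> i" using i j by auto
      then consider "Suc i < j \<or> Suc j < i" | "j = Suc i \<or> i = Suc j" by linarith
      then show ?thesis
      proof cases
        case 1
        show ?thesis by (rule Top_fstar_tie_distant[OF _ v i j 1]) (rule less.hyps)
      next
        case 2
        show ?thesis by (rule Top_fstar_tie_adjacent[OF _ v i j 2]) (rule less.hyps)
      qed
    qed
  qed
qed

lemma Top_fstar_tie:
  "mset v = mset lam \<Longrightarrow> Suc i < length lam \<Longrightarrow> v ! i = v ! Suc i \<Longrightarrow>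
    Top i (fstar lam v) = mconst tt * fstar lam v"
  by (rule ties_eigenD[OF ties_eigen])

end

theorem proposition2p10:
  fixes n :: nat and lam mu :: "nat list" and i :: nat
  assumes "length lam = n"
    and "sorted_wrt (\<ge>) lam"
    and "mset mu = mset lam"
    and "Suc i < n"
  shows "(mu ! i > mu ! Suc i \<longrightarrow> Top i (fstar lam mu) = fstar lam (swapc i mu))
    \<and> (mu ! i = mu ! Suc i \<longrightarrow> Top i (fstar lam mu) = mconst tt * fstar lam mu)
    \<and> (mu ! i < mu ! Suc i \<longrightarrow>
         Top i (fstar lam mu) = mconst (tt - 1) * fstar lam mu + mconst tt * fstar lam (swapc i mu))"
proof -
  interpret partition_shape lam by unfold_locales (rule assms(2))
  have i: "Suc i < length lam" using assms(1,4) by simp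
  show ?thesis
    using Top_fstar_descent[OF assms(3) i] Top_fstar_tie[OF assms(3) i] Top_fstar_ascent[OF assms(3) i]
    by blast
qed

end
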